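(* Let $\{(\mathcal{X}_l,\mathring{\mathcal{X}}_l,p_l)\}_{l\in\mathcal{I}}$ be $B$-$B$-bimodules with specified projections with reduced free product $(\mathcal{X},\mathring{\mathcal{X}},p)$, and for each $l$ let $S_l\subset\mathcal{A}_{l,\mathcal{F}}\cup\mathcal{A}_{l,\mathcal{B}}$. For $1\le i\le m$ let $A_i\in\mathcal{A}_{k(i)}$ be a simple product of elements from $S_{k(i)}$. Assume: (1) there exist $1\le l_1<l_2\le m$ such that $A_{l_1},A_{l_1+1},\dots,A_{l_2}$ are not Boolean products; (2) either $l_1=1$ or $A_{l_1-1}$ is a Boolean product; (3) either $l_2=m$ or $A_{l_2+1}$ is a Boolean product; (4) $k(1)\ne k(2)\ne\cdots\ne k(m)$ (consecutive indices distinct); (5) $\mathbb{E}_{\mathcal{L}(\mathcal{X})}(A_{l_1})=\mathbb{E}_{\mathcal{L}(\mathcal{X})}(A_{l_1+1})=\cdots=\mathbb{E}_{\mathcal{L}(\mathcal{X})}(A_{l_2})=0$. Then $\mathbb{E}_{\mathcal{L}(\mathcal{X})}(A_1\cdots A_m)=0$.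
   Context: $B$ is a unital complex algebra. A $B$-$B$-bimodule with specified projection is a triple $(\mathcal{X},\mathring{\mathcal{X}},p)$ with $\mathcal{X}=B\oplus\mathring{\mathcal{X}}$ a direct sum of $B$-$B$-bimodules and $p(b\oplus\eta)=b$; $\mathcal{L}(\mathcal{X})$ is the algebra of linear operators on $\mathcal{X}$ respecting the bimodule structure and $\mathbb{E}_{\mathcal{L}(\mathcal{X})}(T)=p(T(1_B\oplus0))$. The reduced free product is $\mathcal{X}=B\oplus\mathring{\mathcal{X}}$ with $\mathring{\mathcal{X}}=\bigoplus_{n\ge1}\bigoplus_{i_1\ne\cdots\ne i_n}\mathring{\mathcal{X}}_{i_1}\otimes_B\cdots\otimes_B\mathring{\mathcal{X}}_{i_n}$ (consecutive indices distinct), $p$ the projection onto $B$. For $l\in\mathcal{I}$, $\mathcal{X}(l)=B\oplus\bigoplus_{n\ge1}\bigoplus_{i_1\ne\cdots\ne i_n,\ i_1\ne l}\mathring{\mathcal{X}}_{i_1}\otimes_B\cdots\otimes_B\mathring{\mathcal{X}}_{i_n}$, $V_l:\mathcal{X}\to\mathcal{X}_l\otimes_B\mathcal{X}(l)$ the natural isomorphism, $\lambda_l(a)=V_l^{-1}(a\otimes I)V_l$, $P_l$ the projection onto the summand $B\oplus\mathring{\mathcal{X}}_l$, $\mathcal{A}_{l,\mathcal{F}}=\lambda_l(\mathcal{L}(\mathcal{X}_l))$, $\mathcal{A}_{l,\mathcal{B}}=P_l\lambda_l(\mathcal{L}(\mathcal{X}_l))P_l$, $\mathcal{A}_l$ the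 algebra generated by both. A product $a_1\cdots a_r$ with all $a_t\in S_l$ is a simple product of elements from $S_l$; it is a Boolean product if some $a_t\in S_l\cap\mathcal{A}_{l,\mathcal{B}}$. *)

theory Defs
  imports Complex_Main
begin

text \<open>B is a type of class ring_1 together with a unital ring homomorphism
  from the complex numbers into the centre of B (the scalar structure).\<close>

definition cplx_alg :: "(complex \<Rightarrow> 'b::ring_1) \<Rightarrow> bool" where
  "cplx_alg e \<longleftrightarrow> e 1 = 1 \<and> (\<forall>x y. e (x + y) = e x + e y)
     \<and> (\<forall>x y. e (x * y) = e x * e y) \<and> (\<forall>c b. e c * b = b * e c)"

record ('b, 'x) bimod =
  bm_car  :: "'x set"
  bm_zero :: 'x
  bm_add  :: "'x \<Rightarrow> 'x \<Rightarrow> 'x"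
  bm_neg  :: "'x \<Rightarrow> 'x"
  bm_lact :: "'b \<Rightarrow> 'x \<Rightarrow> 'x"
  bm_ract :: "'x \<Rightarrow> 'b \<Rightarrow> 'x"

definition is_bimod :: "(complex \<Rightarrow> 'b::ring_1) \<Rightarrow> ('b, 'x, 'z) bimod_scheme \<Rightarrow> bool" where
  "is_bimod e M \<longleftrightarrow>
     (let C = bm_car M; z = bm_zero M; ad = bm_add M; ng = bm_neg M;
          la = bm_lact M; ra = bm_ract M in
     z \<in> C \<and> (\<forall>x\<in>C. \<forall>y\<in>C. ad x y \<in> C) \<and> (\<forall>x\<in>C. ng x \<in> C)
     \<and> (\<forall>b. \<forall>x\<in>C. la b x \<in> C \<and> ra x b \<in> C)
     \<and> (\<forall>x\<in>C. \<forall>y\<in>C. \<forall>w\<in>C. ad (ad x y) w = ad x (ad y w))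
     \<and> (\<forall>x\<in>C. \<forall>y\<in>C. ad x y = ad y x)
     \<and> (\<forall>x\<in>C. ad z x = x) \<and> (\<forall>x\<in>C. ad (ng x) x = z)
     \<and> (\<forall>x\<in>C. la 1 x = x \<and> ra x 1 = x)
     \<and> (\<forall>a b. \<forall>x\<in>C. la (a * b) x = la a (la b x) \<and> ra x (a * b) = ra (ra x a) b)
     \<and> (\<forall>a b. \<forall>x\<in>C. la (a + b) x = ad (la a x) (la b x) \<and> ra x (a + b) = ad (ra x a) (ra x b))
     \<and> (\<forall>a. \<forall>x\<in>C. \<forall>y\<in>C. la a (ad x y) = ad (la a x) (la a y) \<and> ra (ad x y) a = ad (ra x a) (ra y a))
     \<and> (\<forall>a b. \<forall>x\<in>C. la a (ra x b) = ra (la a x) b)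
     \<and> (\<forall>c. \<forall>x\<in>C. la (e c) x = ra x (e c)))"

text \<open>Elements of X_l are pairs (b, xi); the specified projection is fst.\<close>

definition Xcar :: "('b, 'x, 'z) bimod_scheme \<Rightarrow> ('b \<times> 'x) set" where
  "Xcar M = {(b, \<xi>). \<xi> \<in> bm_car M}"

definition is_op :: "('b::ring_1, 'x, 'z) bimod_scheme \<Rightarrow> ('b \<times> 'x \<Rightarrow> 'b \<times> 'x) \<Rightarrow> bool" where
  "is_op M a \<longleftrightarrow>
     (\<forall>x\<in>Xcar M. a x \<in> Xcar M)
   \<and> (\<forall>b \<xi> c \<eta>. \<xi> \<in> bm_car M \<longrightarrow> \<eta> \<in> bm_car M \<longrightarrow>
        a (b + c, bm_add M \<xi> \<eta>) = (fst (a (b, \<xi>)) + fst (a (c, \<eta>)), bm_add M (snd (a (b, \<xi>))) (snd (a (c, \<eta>)))))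
   \<and> (\<forall>c b \<xi>. \<xi> \<in> bm_car M \<longrightarrow>
        a (c * b, bm_lact M c \<xi>) = (c * fst (a (b, \<xi>)), bm_lact M c (snd (a (b, \<xi>))))
      \<and> a (b * c, bm_ract M \<xi> c) = (fst (a (b, \<xi>)) * c, bm_ract M (snd (a (b, \<xi>))) c))"

text \<open>Words: nonempty lists of letters (i, xi), xi in Xo_i, consecutive indices distinct.
  A word stands for the elementary tensor xi_1 (x)_B ... (x)_B xi_n.\<close>

definition alt_word :: "('i \<Rightarrow> ('b, 'x, 'z) bimod_scheme) \<Rightarrow> ('i \<times> 'x) list \<Rightarrow> bool" where
  "alt_word Xo w \<longleftrightarrow> w \<noteq> [] \<and> (\<forall>j. Suc j < length w \<longrightarrow> fst (w ! j) \<noteq> fst (w ! Suc j))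
     \<and> (\<forall>p\<in>set w. snd p \<in> bm_car (Xo (fst p)))"

definition ZW :: "('i \<Rightarrow> ('b, 'x, 'z) bimod_scheme) \<Rightarrow> (('i \<times> 'x) list \<Rightarrow> int) set" where
  "ZW Xo = {f. finite {w. f w \<noteq> 0} \<and> (\<forall>w. f w \<noteq> 0 \<longrightarrow> alt_word Xo w)}"

definition dlt :: "('i \<times> 'x) list \<Rightarrow> ('i \<times> 'x) list \<Rightarrow> int" where
  "dlt w = (\<lambda>u. if u = w then 1 else 0)"

text \<open>Generators of the relations: additivity in each tensor slot and B-balancing.\<close>
definition rel_gens :: "('i \<Rightarrow> ('b, 'x, 'z) bimod_scheme) \<Rightarrow> (('i \<times> 'x) list \<Rightarrow> int) set" where
  "rel_gens Xo =
     {(\<lambda>u. dlt (w[j := (fst (w ! j), bm_add (Xo (fst (w ! j))) \<xi> \<eta>)]) u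
            - dlt (w[j := (fst (w ! j), \<xi>)]) u - dlt (w[j := (fst (w ! j), \<eta>)]) u)
       | w j \<xi> \<eta>. alt_word Xo w \<and> j < length w
            \<and> \<xi> \<in> bm_car (Xo (fst (w ! j))) \<and> \<eta> \<in> bm_car (Xo (fst (w ! j)))}
   \<union> {(\<lambda>u. dlt (w[j := (fst (w ! j), bm_ract (Xo (fst (w ! j))) (snd (w ! j)) b)]) u
            - dlt (w[Suc j := (fst (w ! Suc j), bm_lact (Xo (fst (w ! Suc j))) b (snd (w ! Suc j)))]) u)
       | w j b. alt_word Xo w \<and> Suc j < length w}"

inductive_set rel_sub :: "('i \<Rightarrow> ('b, 'x, 'z) bimod_scheme) \<Rightarrow> (('i \<times> 'x) list \<Rightarrow> int) set"
  for Xo where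
    gen: "f \<in> rel_gens Xo \<Longrightarrow> f \<in> rel_sub Xo"
  | zero: "(\<lambda>_. 0) \<in> rel_sub Xo"
  | diff: "f \<in> rel_sub Xo \<Longrightarrow> g \<in> rel_sub Xo \<Longrightarrow> (\<lambda>u. f u - g u) \<in> rel_sub Xo"

text \<open>Classes in the quotient (the reduced part of the free product, Xo).\<close>
definition cls :: "('i \<Rightarrow> ('b, 'x, 'z) bimod_scheme) \<Rightarrow> (('i \<times> 'x) list \<Rightarrow> int)
     \<Rightarrow> (('i \<times> 'x) list \<Rightarrow> int) set" where
  "cls Xo f = {g \<in> ZW Xo. (\<lambda>u. f u - g u) \<in> rel_sub Xo}"

definition rep :: "('i \<Rightarrow> ('b, 'x, 'z) bimod_scheme) \<Rightarrow> (('i \<times> 'x) list \<Rightarrow> int) set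
     \<Rightarrow> (('i \<times> 'x) list \<Rightarrow> int)" where
  "rep Xo x = (SOME f. f \<in> ZW Xo \<and> x = cls Xo f)"

text \<open>The free product X = B (+) Xo; elements are pairs (b, class).\<close>
type_synonym ('b, 'i, 'x) fpel = "'b \<times> (('i \<times> 'x) list \<Rightarrow> int) set"
type_synonym ('b, 'i, 'x) fpop = "('b, 'i, 'x) fpel \<Rightarrow> ('b, 'i, 'x) fpel"

definition FPcar :: "('i \<Rightarrow> ('b, 'x, 'z) bimod_scheme) \<Rightarrow> ('b, 'i, 'x) fpel set" where
  "FPcar Xo = {(b, cls Xo f) | b f. f \<in> ZW Xo}"

definition restr :: "('i \<Rightarrow> ('b, 'x, 'z) bimod_scheme) \<Rightarrow> ('b, 'i, 'x) fpop \<Rightarrow> ('b, 'i, 'x) fpop" where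
  "restr Xo T = (\<lambda>x. if x \<in> FPcar Xo then T x else undefined)"

definition lactw :: "('i \<Rightarrow> ('b, 'x, 'z) bimod_scheme) \<Rightarrow> 'b \<Rightarrow> ('i \<times> 'x) list \<Rightarrow> ('i \<times> 'x) list" where
  "lactw Xo b w = (case w of [] \<Rightarrow> [] | p # r \<Rightarrow> (fst p, bm_lact (Xo (fst p)) b (snd p)) # r)"

text \<open>Image of an elementary tensor w under lambda_l(a) = V_l^{-1}(a (x) I)V_l,
  as a pair (B-component, representative in the free abelian group).\<close>
definition lam_word :: "('i \<Rightarrow> ('b::ring_1, 'x, 'z) bimod_scheme) \<Rightarrow> 'i \<Rightarrow> ('b \<times> 'x \<Rightarrow> 'b \<times> 'x)
     \<Rightarrow> ('i \<times> 'x) list \<Rightarrow> 'b \<times> (('i \<times> 'x) list \<Rightarrow> int)" where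
  "lam_word Xo l a w =
     (case w of [] \<Rightarrow> (0, \<lambda>_. 0)
      | p # r \<Rightarrow>
         (if fst p \<noteq> l then
            (let q = a (1, bm_zero (Xo l)) in
              (0, \<lambda>u. dlt (lactw Xo (fst q) w) u + dlt ((l, snd q) # w) u))
          else
            (let q = a (0, snd p) in
              (if r = [] then (fst q, dlt [(l, snd q)])
               else (0, \<lambda>u. dlt (lactw Xo (fst q) r) u + dlt ((l, snd q) # r) u)))))"

definition lam :: "('i \<Rightarrow> ('b::ring_1, 'x, 'z) bimod_scheme) \<Rightarrow> 'i \<Rightarrow> ('b \<times> 'x \<Rightarrow> 'b \<times> 'x)
     \<Rightarrow> ('b, 'i, 'x) fpop" where
  "lam Xo l a = restr Xo (\<lambda>x.
     (let f = rep Xo (snd x); q = a (fst x, bm_zero (Xo l)); S = {w. f w \<noteq> 0} in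
       (fst q + (\<Sum>w\<in>S. of_int (f w) * fst (lam_word Xo l a w)),
        cls Xo (\<lambda>u. dlt [(l, snd q)] u + (\<Sum>w\<in>S. f w * snd (lam_word Xo l a w) u)))))"

definition Ppr :: "('i \<Rightarrow> ('b, 'x, 'z) bimod_scheme) \<Rightarrow> 'i \<Rightarrow> ('b, 'i, 'x) fpop" where
  "Ppr Xo l = restr Xo (\<lambda>x.
     (fst x, cls Xo (\<lambda>w. if (\<exists>\<xi>. w = [(l, \<xi>)]) then rep Xo (snd x) w else 0)))"

definition AF :: "('i \<Rightarrow> ('b::ring_1, 'x, 'z) bimod_scheme) \<Rightarrow> 'i \<Rightarrow> ('b, 'i, 'x) fpop set" where
  "AF Xo l = lam Xo l ` {a. is_op (Xo l) a}"

definition AB :: "('i \<Rightarrow> ('b::ring_1, 'x, 'z) bimod_scheme) \<Rightarrow> 'i \<Rightarrow> ('b, 'i, 'x) fpop set" where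
  "AB Xo l = (\<lambda>a. restr Xo (Ppr Xo l \<circ> lam Xo l a \<circ> Ppr Xo l)) ` {a. is_op (Xo l) a}"

definition Exp :: "('i \<Rightarrow> ('b::ring_1, 'x, 'z) bimod_scheme) \<Rightarrow> ('b, 'i, 'x) fpop \<Rightarrow> 'b" where
  "Exp Xo T = fst (T (1, cls Xo (\<lambda>_. 0)))"

definition oprod :: "('a \<Rightarrow> 'a) list \<Rightarrow> 'a \<Rightarrow> 'a" where
  "oprod Ts = foldr (\<circ>) Ts id"

definition boolean_prod :: "('i \<Rightarrow> ('b::ring_1, 'x, 'z) bimod_scheme) \<Rightarrow> ('i \<Rightarrow> ('b, 'i, 'x) fpop set)
     \<Rightarrow> 'i \<Rightarrow> ('b, 'i, 'x) fpop list \<Rightarrow> bool" where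
  "boolean_prod Xo S l Ts \<longleftrightarrow> (\<exists>T\<in>set Ts. T \<in> S l \<inter> AB Xo l)"

end

theory Submission
  imports Defs
begin

text \<open>Evaluate \<open>A\<^sub>1 \<cdots> A\<^sub>m\<close> on the vacuum \<open>1 \<oplus> 0\<close> from the right. The factors after the
  centered stretch \<open>A(l\<^sub>1), \<dots>, A(l\<^sub>2)\<close> leave the vacuum in \<open>B \<oplus> X\<^sub>j\<close>, \<open>j = k(l\<^sub>2 + 1)\<close> (their
  Boolean factor projects there), i.e. in the span of words not starting with \<open>k(l\<^sub>2)\<close>. A product \<open>c\<close> of
  free operators at \<open>l\<close> acts on \<open>X \<cong> X\<^sub>l \<otimes> X(l)\<close> as \<open>c \<otimes> I\<close>, and centeredness says that
  \<open>c\<close> maps \<open>1\<close> into the reduced part of \<open>X\<^sub>l\<close>; hence every factor of the stretch produces words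
  starting with its own index, of length at least 2 as soon as its input has no \<open>B\<close>-component.
  The result of the stretch lies in a set that every free factor at \<open>l' = k(l\<^sub>1 - 1)\<close> preserves and
  that \<open>P\<^sub>l\<^sub>'\<close> annihilates, so the Boolean product \<open>A(l\<^sub>1 - 1)\<close> sends it to \<open>0\<close>, which the
  remaining factors keep. In every case the \<open>B\<close>-component, that is the expectation, vanishes.\<close>

context
  fixes e :: "complex \<Rightarrow> 'b::ring_1" and M :: "('b, 'x, 'z) bimod_scheme"
  assumes bm: "is_bimod e M"
begin

lemma bm_zero_mem: "bm_zero M \<in> bm_car M"
  using bm unfolding is_bimod_def Let_def by auto

lemma bm_neg_mem: "x \<in> bm_car M \<Longrightarrow> bm_neg M x \<in> bm_car M"
  using bm unfolding is_bimod_def Let_def by auto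

lemma bm_lact_mem: "x \<in> bm_car M \<Longrightarrow> bm_lact M b x \<in> bm_car M"
  using bm unfolding is_bimod_def Let_def by auto

lemma bm_ract_mem: "x \<in> bm_car M \<Longrightarrow> bm_ract M x b \<in> bm_car M"
  using bm unfolding is_bimod_def Let_def by auto

lemma bm_add_assoc: "x \<in> bm_car M \<Longrightarrow> y \<in> bm_car M \<Longrightarrow> w \<in> bm_car M \<Longrightarrow>
        bm_add M (bm_add M x y) w = bm_add M x (bm_add M y w)"
  using bm unfolding is_bimod_def Let_def by auto

lemma bm_add_zero_left: "x \<in> bm_car M \<Longrightarrow> bm_add M (bm_zero M) x = x"
  using bm unfolding is_bimod_def Let_def by auto

lemma bm_add_neg_left: "x \<in> bm_car M \<Longrightarrow> bm_add M (bm_neg M x) x = bm_zero M"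
  using bm unfolding is_bimod_def Let_def by auto

lemma bm_lact_one: "x \<in> bm_car M \<Longrightarrow> bm_lact M 1 x = x"
  using bm unfolding is_bimod_def Let_def by auto

lemma bm_lact_mult: "x \<in> bm_car M \<Longrightarrow> bm_lact M (a * b) x = bm_lact M a (bm_lact M b x)"
  using bm unfolding is_bimod_def Let_def by auto

lemma bm_lact_scalar_add: "x \<in> bm_car M \<Longrightarrow> bm_lact M (a + b) x = bm_add M (bm_lact M a x) (bm_lact M b x)"
  using bm unfolding is_bimod_def Let_def by auto

lemma bm_lact_add: "x \<in> bm_car M \<Longrightarrow> y \<in> bm_car M \<Longrightarrow> bm_lact M a (bm_add M x y) = bm_add M (bm_lact M a x) (bm_lact M a y)"
  using bm unfolding is_bimod_def Let_def by auto

lemma bm_ract_add: "x \<in> bm_car M \<Longrightarrow> y \<in> bm_car M \<Longrightarrow> bm_ract M (bm_add M x y) a = bm_add M (bm_ract M x a) (bm_ract M y a)"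
  using bm unfolding is_bimod_def Let_def by auto

lemma bm_lact_ract: "x \<in> bm_car M \<Longrightarrow> bm_lact M a (bm_ract M x b) = bm_ract M (bm_lact M a x) b"
  using bm unfolding is_bimod_def Let_def by auto

lemma bm_add_idem_eq_zero: assumes "x \<in> bm_car M" "bm_add M x x = x" shows "x = bm_zero M"
proof -
  have "bm_add M (bm_neg M x) (bm_add M x x) = bm_add M (bm_neg M x) x" using assms by simp
  then have "bm_add M (bm_add M (bm_neg M x) x) x = bm_zero M"
    using assms bm_add_assoc bm_neg_mem bm_add_neg_left by metis
  then show ?thesis using assms bm_add_zero_left bm_add_neg_left by metis
qed

lemma bm_lact_zero: "bm_lact M c (bm_zero M) = bm_zero M"
  using bm_add_idem_eq_zero[of "bm_lact M c (bm_zero M)"] bm_lact_add[of "bm_zero M" "bm_zero M" c] bm_add_zero_left bm_zero_mem bm_lact_mem by metis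

lemma bm_ract_zero: "bm_ract M (bm_zero M) c = bm_zero M"
  using bm_add_idem_eq_zero[of "bm_ract M (bm_zero M) c"] bm_ract_add[of "bm_zero M" "bm_zero M" c] bm_add_zero_left bm_zero_mem bm_ract_mem by metis

lemma bm_lact_scalar_zero: "x \<in> bm_car M \<Longrightarrow> bm_lact M 0 x = bm_zero M"
  using bm_add_idem_eq_zero[of "bm_lact M 0 x"] bm_lact_scalar_add[of x 0 0] bm_lact_mem by simp

end

context
  fixes e :: "complex \<Rightarrow> 'b::ring_1" and M :: "('b, 'x, 'z) bimod_scheme" and a
  assumes bm: "is_bimod e M" and op: "is_op M a"
begin

lemma op_basic:
  shows op_Xcar: "\<And>x. x \<in> Xcar M \<Longrightarrow> a x \<in> Xcar M"
   and op_add: "\<And>b \<xi> c \<eta>. \<xi> \<in> bm_car M \<Longrightarrow> \<eta> \<in> bm_car M \<Longrightarrow>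
        a (b + c, bm_add M \<xi> \<eta>) = (fst (a (b, \<xi>)) + fst (a (c, \<eta>)), bm_add M (snd (a (b, \<xi>))) (snd (a (c, \<eta>))))"
   and op_lact: "\<And>c b \<xi>. \<xi> \<in> bm_car M \<Longrightarrow>
        a (c * b, bm_lact M c \<xi>) = (c * fst (a (b, \<xi>)), bm_lact M c (snd (a (b, \<xi>))))"
   and op_ract: "\<And>c b \<xi>. \<xi> \<in> bm_car M \<Longrightarrow>
        a (b * c, bm_ract M \<xi> c) = (fst (a (b, \<xi>)) * c, bm_ract M (snd (a (b, \<xi>))) c)"
  using op unfolding is_op_def by blast+

lemma op_snd_mem: "\<xi> \<in> bm_car M \<Longrightarrow> snd (a (b, \<xi>)) \<in> bm_car M"
  using op_Xcar[of "(b,\<xi>)"] unfolding Xcar_def by auto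

lemma op_zero: "a (0, bm_zero M) = (0, bm_zero M)"
proof -
  have h: "a (0 + 0, bm_add M (bm_zero M) (bm_zero M)) = (fst (a (0, bm_zero M)) + fst (a (0, bm_zero M)),
     bm_add M (snd (a (0, bm_zero M))) (snd (a (0, bm_zero M))))"
    using op_add bm_zero_mem[OF bm] by blast
  have "bm_add M (bm_zero M) (bm_zero M) = bm_zero M" using bm_add_zero_left[OF bm] bm_zero_mem[OF bm] by blast
  then have h2: "a (0, bm_zero M) = (fst (a (0, bm_zero M)) + fst (a (0, bm_zero M)),
     bm_add M (snd (a (0, bm_zero M))) (snd (a (0, bm_zero M))))" using h by simp
  then have "fst (a (0, bm_zero M)) = 0"
    by (metis add_cancel_right_right fst_conv)
  moreover have "snd (a (0, bm_zero M)) = bm_zero M"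
    using bm_add_idem_eq_zero[OF bm, of "snd (a (0, bm_zero M))"] h2 op_snd_mem bm_zero_mem[OF bm] by (metis snd_conv)
  ultimately show ?thesis by (metis prod.collapse)
qed

lemma op_split: "\<xi> \<in> bm_car M \<Longrightarrow> a (b, \<xi>) =
   (fst (a (b, bm_zero M)) + fst (a (0, \<xi>)), bm_add M (snd (a (b, bm_zero M))) (snd (a (0, \<xi>))))"
  using op_add[where b=b and c=0 and \<xi>="bm_zero M" and \<eta>=\<xi>] bm_zero_mem[OF bm] bm_add_zero_left[OF bm] by simp

lemma op_scalar_lact: "a (c, bm_zero M) = (c * fst (a (1, bm_zero M)), bm_lact M c (snd (a (1, bm_zero M))))"
  using op_lact[where c=c and b=1 and \<xi>="bm_zero M"] bm_zero_mem[OF bm] bm_lact_zero[OF bm] by simp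

lemma op_scalar_ract: "a (c, bm_zero M) = (fst (a (1, bm_zero M)) * c, bm_ract M (snd (a (1, bm_zero M))) c)"
  using op_ract[where c=c and b=1 and \<xi>="bm_zero M"] bm_zero_mem[OF bm] bm_ract_zero[OF bm] by simp

lemma op_unit_fst_commute: "c * fst (a (1, bm_zero M)) = fst (a (1, bm_zero M)) * c"
  using op_scalar_lact op_scalar_ract by (metis fst_conv)

lemma op_unit_snd_commute: "bm_lact M c (snd (a (1, bm_zero M))) = bm_ract M (snd (a (1, bm_zero M))) c"
  using op_scalar_lact op_scalar_ract by (metis snd_conv)

lemma op_reduced_ract: "\<xi> \<in> bm_car M \<Longrightarrow> a (0, bm_ract M \<xi> c) = (fst (a (0, \<xi>)) * c, bm_ract M (snd (a (0, \<xi>))) c)"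
  using op_ract[where c=c and b=0 and \<xi>=\<xi>] by simp

end

lemma Xcar_iff: "x \<in> Xcar M \<longleftrightarrow> snd x \<in> bm_car M"
  unfolding Xcar_def by (cases x) auto

lemma is_op_comp:
  assumes "is_op M a" "is_op M c"
  shows "is_op M (a \<circ> c)"
proof -
  have cc: "\<And>x. x \<in> Xcar M \<Longrightarrow> c x \<in> Xcar M" using assms(2) unfolding is_op_def by blast
  have ca: "\<And>x. x \<in> Xcar M \<Longrightarrow> a x \<in> Xcar M" using assms(1) unfolding is_op_def by blast
  have c2: "\<And>b \<xi>. \<xi> \<in> bm_car M \<Longrightarrow> snd (c (b, \<xi>)) \<in> bm_car M"
    using cc by (simp add: Xcar_iff)
  show ?thesis
    unfolding is_op_def
  proof (intro conjI allI impI ballI)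
    fix x assume "x \<in> Xcar M" then show "(a \<circ> c) x \<in> Xcar M" using ca cc by simp
  next
    fix b \<xi> d \<eta> assume h: "\<xi> \<in> bm_car M" "\<eta> \<in> bm_car M"
    have "c (b + d, bm_add M \<xi> \<eta>) = (fst (c (b, \<xi>)) + fst (c (d, \<eta>)), bm_add M (snd (c (b, \<xi>))) (snd (c (d, \<eta>))))"
      using assms(2) h unfolding is_op_def by blast
    moreover have "a (fst (c (b, \<xi>)) + fst (c (d, \<eta>)), bm_add M (snd (c (b, \<xi>))) (snd (c (d, \<eta>))))
       = (fst (a (c (b, \<xi>))) + fst (a (c (d, \<eta>))), bm_add M (snd (a (c (b, \<xi>)))) (snd (a (c (d, \<eta>)))))"
      using assms(1) c2[OF h(1)] c2[OF h(2)] unfolding is_op_def by simp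
    ultimately show "(a \<circ> c) (b + d, bm_add M \<xi> \<eta>) = (fst ((a \<circ> c) (b, \<xi>)) + fst ((a \<circ> c) (d, \<eta>)),
          bm_add M (snd ((a \<circ> c) (b, \<xi>))) (snd ((a \<circ> c) (d, \<eta>))))" by simp
  next
    fix d b \<xi> assume h: "\<xi> \<in> bm_car M"
    have "c (d * b, bm_lact M d \<xi>) = (d * fst (c (b, \<xi>)), bm_lact M d (snd (c (b, \<xi>))))"
      using assms(2) h unfolding is_op_def by blast
    moreover have "a (d * fst (c (b, \<xi>)), bm_lact M d (snd (c (b, \<xi>)))) = (d * fst (a (c (b, \<xi>))), bm_lact M d (snd (a (c (b, \<xi>)))))"
      using assms(1) c2[OF h] unfolding is_op_def by simp
    ultimately show "(a \<circ> c) (d * b, bm_lact M d \<xi>) = (d * fst ((a \<circ> c) (b, \<xi>)), bm_lact M d (snd ((a \<circ> c) (b, \<xi>))))"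
      by simp
    have "c (b * d, bm_ract M \<xi> d) = (fst (c (b, \<xi>)) * d, bm_ract M (snd (c (b, \<xi>))) d)"
      using assms(2) h unfolding is_op_def by blast
    moreover have "a (fst (c (b, \<xi>)) * d, bm_ract M (snd (c (b, \<xi>))) d) = (fst (a (c (b, \<xi>))) * d, bm_ract M (snd (a (c (b, \<xi>)))) d)"
      using assms(1) c2[OF h] unfolding is_op_def by simp
    ultimately show "(a \<circ> c) (b * d, bm_ract M \<xi> d) = (fst ((a \<circ> c) (b, \<xi>)) * d, bm_ract M (snd ((a \<circ> c) (b, \<xi>))) d)"
      by simp
  qed
qed

lemma is_op_id: "is_op M id"
  unfolding is_op_def by simp

section \<open>Words and the relation subgroup\<close>

lemma lactw_Cons[simp]: "lactw Xo c (p # r) = (fst p, bm_lact (Xo (fst p)) c (snd p)) # r"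
  by (simp add: lactw_def)

lemma finite_dlt_support: "finite {u. dlt w u \<noteq> 0}"
  by (simp add: dlt_def)

lemma alt_word_nonempty: "alt_word Xo w \<Longrightarrow> w \<noteq> []"
  by (simp add: alt_word_def)

lemma alt_word_Cons: "alt_word Xo (p # r) \<longleftrightarrow> snd p \<in> bm_car (Xo (fst p)) \<and>
   (r \<noteq> [] \<longrightarrow> alt_word Xo r \<and> fst p \<noteq> fst (hd r))"
proof
  assume H: "alt_word Xo (p # r)"
  have a: "\<forall>j. Suc j < length (p # r) \<longrightarrow> fst ((p # r) ! j) \<noteq> fst ((p # r) ! Suc j)"
   and b: "\<forall>q\<in>set (p # r). snd q \<in> bm_car (Xo (fst q))" using H unfolding alt_word_def by blast+
  show "snd p \<in> bm_car (Xo (fst p)) \<and> (r \<noteq> [] \<longrightarrow> alt_word Xo r \<and> fst p \<noteq> fst (hd r))"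
  proof (intro conjI impI)
    show "snd p \<in> bm_car (Xo (fst p))" using b by simp
    assume r: "r \<noteq> []"
    show "alt_word Xo r" unfolding alt_word_def
    proof (intro conjI allI impI ballI)
      show "r \<noteq> []" by fact
      fix j assume "Suc j < length r"
      then show "fst (r ! j) \<noteq> fst (r ! Suc j)" using a[rule_format, of "Suc j"] by simp
    next
      fix q assume "q \<in> set r" then show "snd q \<in> bm_car (Xo (fst q))" using b by simp
    qed
    show "fst p \<noteq> fst (hd r)" using a[rule_format, of 0] r by (simp add: hd_conv_nth)
  qed
next
  assume H: "snd p \<in> bm_car (Xo (fst p)) \<and> (r \<noteq> [] \<longrightarrow> alt_word Xo r \<and> fst p \<noteq> fst (hd r))"
  show "alt_word Xo (p # r)" unfolding alt_word_def
  proof (intro conjI allI impI ballI)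
    show "p # r \<noteq> []" by simp
  next
    fix j assume j: "Suc j < length (p # r)"
    then have r: "r \<noteq> []" by auto
    then have ar: "alt_word Xo r" and hr: "fst p \<noteq> fst (hd r)" using H by auto
    show "fst ((p # r) ! j) \<noteq> fst ((p # r) ! Suc j)"
    proof (cases j)
      case 0 then show ?thesis using hr r by (simp add: hd_conv_nth)
    next
      case (Suc j') then show ?thesis using ar j unfolding alt_word_def by simp
    qed
  next
    fix q assume "q \<in> set (p # r)"
    then show "snd q \<in> bm_car (Xo (fst q))" using H unfolding alt_word_def
      by (cases "q = p") auto
  qed
qed

lemma alt_word_single: "alt_word Xo [(l, \<xi>)] \<longleftrightarrow> \<xi> \<in> bm_car (Xo l)"
  by (simp add: alt_word_Cons)

lemma rel_sub_additivity: "alt_word Xo w \<Longrightarrow> j < length w \<Longrightarrow> \<xi> \<in> bm_car (Xo (fst (w ! j))) \<Longrightarrow> \<eta> \<in> bm_car (Xo (fst (w ! j)))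
  \<Longrightarrow> (\<lambda>u. dlt (w[j := (fst (w ! j), bm_add (Xo (fst (w ! j))) \<xi> \<eta>)]) u
            - dlt (w[j := (fst (w ! j), \<xi>)]) u - dlt (w[j := (fst (w ! j), \<eta>)]) u) \<in> rel_sub Xo"
  by (rule rel_sub.gen) (unfold rel_gens_def, blast)

lemma rel_sub_balancing: "alt_word Xo w \<Longrightarrow> Suc j < length w
  \<Longrightarrow> (\<lambda>u. dlt (w[j := (fst (w ! j), bm_ract (Xo (fst (w ! j))) (snd (w ! j)) b)]) u
            - dlt (w[Suc j := (fst (w ! Suc j), bm_lact (Xo (fst (w ! Suc j))) b (snd (w ! Suc j)))]) u) \<in> rel_sub Xo"
  by (rule rel_sub.gen) (unfold rel_gens_def, blast)

lemma rel_sub_uminus: "f \<in> rel_sub Xo \<Longrightarrow> (\<lambda>u. - f u) \<in> rel_sub Xo"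
  using rel_sub.diff[OF rel_sub.zero, of f] by simp

lemma rel_sub_add: "f \<in> rel_sub Xo \<Longrightarrow> g \<in> rel_sub Xo \<Longrightarrow> (\<lambda>u. f u + g u) \<in> rel_sub Xo"
  using rel_sub.diff[of f Xo "\<lambda>u. - g u"] rel_sub_uminus[of g Xo] by simp

lemma rel_sub_cong: "f \<in> rel_sub Xo \<Longrightarrow> (\<And>u. f u = g u) \<Longrightarrow> g \<in> rel_sub Xo"
  by (metis ext)

lemma rel_sub_sum: "finite I \<Longrightarrow> (\<And>i. i \<in> I \<Longrightarrow> f i \<in> rel_sub Xo) \<Longrightarrow> (\<lambda>u. \<Sum>i\<in>I. f i u) \<in> rel_sub Xo"
proof (induction I rule: finite_induct)
  case empty then show ?case using rel_sub.zero by simp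
next
  case (insert x F)
  have a: "f x \<in> rel_sub Xo" using insert.prems by simp
  have b: "(\<lambda>u. \<Sum>i\<in>F. f i u) \<in> rel_sub Xo" using insert.IH insert.prems by simp
  have "(\<lambda>u. f x u + (\<Sum>i\<in>F. f i u)) \<in> rel_sub Xo" using rel_sub_add[OF a b] .
  then show ?case using insert by simp
qed

lemma rel_sub_smult_nat: "f \<in> rel_sub Xo \<Longrightarrow> (\<lambda>u. int n * f u) \<in> rel_sub Xo"
proof (induction n)
  case 0 then show ?case using rel_sub.zero by simp
next
  case (Suc n)
  have "(\<lambda>u. f u + int n * f u) \<in> rel_sub Xo" using rel_sub_add[OF Suc.prems Suc.IH[OF Suc.prems]] .
  then show ?case by (simp add: algebra_simps)
qed

lemma rel_sub_smult: assumes f: "f \<in> rel_sub Xo" shows "(\<lambda>u. (n::int) * f u) \<in> rel_sub Xo"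
proof (cases "n \<ge> 0")
  case True
  then obtain k where "n = int k" using nonneg_int_cases by blast
  then show ?thesis using rel_sub_smult_nat f by auto
next
  case False
  define k where "k = nat (- n)"
  have "n = - int k" using False k_def by simp
  have "(\<lambda>u. - (int k * f u)) \<in> rel_sub Xo" using rel_sub_uminus[OF rel_sub_smult_nat[OF f]] .
  then show ?thesis using \<open>n = - int k\<close> by simp
qed

lemma finite_dlt3_support: "finite {u. dlt a u - dlt b u - dlt c u \<noteq> 0}"
  by (rule finite_subset[of _ "{a,b,c}"]) (auto simp: dlt_def)

lemma finite_dlt2_support: "finite {u. dlt a u - dlt b u \<noteq> 0}"
  by (rule finite_subset[of _ "{a,b}"]) (auto simp: dlt_def)

lemma rel_sub_finite_support: "f \<in> rel_sub Xo \<Longrightarrow> finite {u. f u \<noteq> 0}"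
proof (induction rule: rel_sub.induct)
  case (gen f)
  then show ?case unfolding rel_gens_def
    using finite_dlt3_support finite_dlt2_support by (elim UnE CollectE exE conjE) simp_all
next
  case zero then show ?case by simp
next
  case (diff f g)
  have "{u. f u - g u \<noteq> 0} \<subseteq> {u. f u \<noteq> 0} \<union> {u. g u \<noteq> 0}" by auto
  then show ?case using diff.IH finite_subset by blast
qed

lemma cls_eqI: assumes "(\<lambda>u. f u - g u) \<in> rel_sub Xo" shows "cls Xo f = cls Xo g"
proof -
  have "(\<lambda>u. g u - f u) \<in> rel_sub Xo" using rel_sub_uminus[OF assms] by simp
  have 1: "(\<lambda>u. g u - h u) \<in> rel_sub Xo" if "(\<lambda>u. f u - h u) \<in> rel_sub Xo" for h
    using rel_sub.diff[OF that assms] by simp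
  have 2: "(\<lambda>u. f u - h u) \<in> rel_sub Xo" if "(\<lambda>u. g u - h u) \<in> rel_sub Xo" for h
    using rel_sub_add[OF that assms] by simp
  show ?thesis unfolding cls_def using 1 2 by blast
qed

lemma rep_cls: assumes "f \<in> ZW Xo"
  shows "rep Xo (cls Xo f) \<in> ZW Xo" "(\<lambda>u. f u - rep Xo (cls Xo f) u) \<in> rel_sub Xo"
proof -
  have ex: "\<exists>g. g \<in> ZW Xo \<and> cls Xo f = cls Xo g" using assms by blast
  have r: "rep Xo (cls Xo f) \<in> ZW Xo \<and> cls Xo f = cls Xo (rep Xo (cls Xo f))"
    unfolding rep_def using someI_ex[OF ex] by blast
  then show "rep Xo (cls Xo f) \<in> ZW Xo" by blast
  define R where "R = rep Xo (cls Xo f)"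
  have e: "cls Xo f = cls Xo R" "R \<in> ZW Xo" using r R_def by auto
  have "R \<in> cls Xo R" using e(2) rel_sub.zero unfolding cls_def by simp
  then have "R \<in> cls Xo f" using e by simp
  then have "(\<lambda>u. f u - R u) \<in> rel_sub Xo" unfolding cls_def by simp
  then show "(\<lambda>u. f u - rep Xo (cls Xo f) u) \<in> rel_sub Xo" using R_def by simp
qed

lemma rel_sub_add3: "(\<lambda>u. A1 u - A2 u - A3 u) \<in> rel_sub Xo \<Longrightarrow> (\<lambda>u. B1 u - B2 u - B3 u) \<in> rel_sub Xo \<Longrightarrow>
   (\<lambda>u. (A1 u + B1 u) - (A2 u + B2 u) - (A3 u + B3 u)) \<in> rel_sub Xo"
  by (rule rel_sub_cong[OF rel_sub_add]) (assumption, assumption, simp add: algebra_simps)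

lemma rel_sub_add2: "(\<lambda>u. A1 u - A2 u) \<in> rel_sub Xo \<Longrightarrow> (\<lambda>u. B1 u - B2 u) \<in> rel_sub Xo \<Longrightarrow>
   (\<lambda>u. (A1 u + B1 u) - (A2 u + B2 u)) \<in> rel_sub Xo"
  by (rule rel_sub_cong[OF rel_sub_add]) (assumption, assumption, simp add: algebra_simps)

lemma rel_sub_add_same: "(\<lambda>u. B1 u - B2 u) \<in> rel_sub Xo \<Longrightarrow>
   (\<lambda>u. (A u + B1 u) - (A u + B2 u)) \<in> rel_sub Xo"
  by (rule rel_sub_cong) (assumption, simp add: algebra_simps)

lemma fst_hd_list_update: "w \<noteq> [] \<Longrightarrow> fst (hd (w[j := (fst (w ! j), v)])) = fst (hd w)"
  by (cases w; cases j) auto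

definition lin :: "(('i \<times> 'x) list \<Rightarrow> 'c::ring_1) \<Rightarrow> (('i \<times> 'x) list \<Rightarrow> int) \<Rightarrow> 'c" where
  "lin X g = (\<Sum>w\<in>{w. g w \<noteq> 0}. of_int (g w) * X w)"

lemma lin_eq_sum: assumes "finite F" "{w. g w \<noteq> 0} \<subseteq> F"
  shows "lin X g = (\<Sum>w\<in>F. of_int (g w) * X w)"
  unfolding lin_def by (rule sum.mono_neutral_left[OF assms]) auto

lemma lin_add: assumes "finite {w. g1 w \<noteq> 0}" "finite {w. g2 w \<noteq> 0}"
  shows "lin X (\<lambda>w. g1 w + g2 w) = lin X g1 + lin X g2"
proof -
  let ?F = "{w. g1 w \<noteq> 0} \<union> {w. g2 w \<noteq> 0}"
  have f: "finite ?F" using assms by simp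
  have "lin X (\<lambda>w. g1 w + g2 w) = (\<Sum>w\<in>?F. of_int (g1 w + g2 w) * X w)" by (rule lin_eq_sum[OF f]) auto
  also have "\<dots> = (\<Sum>w\<in>?F. of_int (g1 w) * X w) + (\<Sum>w\<in>?F. of_int (g2 w) * X w)"
    by (simp add: distrib_right sum.distrib)
  also have "\<dots> = lin X g1 + lin X g2" using lin_eq_sum[OF f, of g1 X] lin_eq_sum[OF f, of g2 X] by auto
  finally show ?thesis .
qed

lemma lin_uminus: "lin X (\<lambda>w. - g w) = - lin X g"
  unfolding lin_def by (simp add: sum_negf)

lemma lin_diff: assumes "finite {w. g1 w \<noteq> 0}" "finite {w. g2 w \<noteq> 0}"
  shows "lin X (\<lambda>w. g1 w - g2 w) = lin X g1 - lin X g2"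
proof -
  have f2: "finite {w. - g2 w \<noteq> 0}" using assms(2) by simp
  have "lin X (\<lambda>w. g1 w + (- g2 w)) = lin X g1 + lin X (\<lambda>w. - g2 w)" by (rule lin_add[OF assms(1) f2])
  then show ?thesis using lin_uminus[of X g2] by simp
qed

lemma lin_smult: assumes "finite {w. g w \<noteq> 0}"
  shows "lin X (\<lambda>w. n * g w) = of_int n * lin X g"
proof -
  have "lin X (\<lambda>w. n * g w) = (\<Sum>w\<in>{w. g w \<noteq> 0}. of_int (n * g w) * X w)"
    by (rule lin_eq_sum[OF assms]) auto
  also have "\<dots> = of_int n * lin X g" unfolding lin_def
    by (simp add: sum_distrib_left mult.assoc)
  finally show ?thesis .
qed

lemma lin_dlt: "lin X (dlt u) = X u"
proof -
  have "lin X (dlt u) = (\<Sum>w\<in>{u}. of_int (dlt u w) * X w)" by (rule lin_eq_sum) (auto simp: dlt_def)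
  then show ?thesis by (simp add: dlt_def)
qed

lemma lin_zero: "lin X (\<lambda>w. 0) = 0"
  unfolding lin_def by simp

lemma lin_cong: "(\<And>w. g w \<noteq> 0 \<Longrightarrow> X w = Y w) \<Longrightarrow> lin X g = lin Y g"
  unfolding lin_def by (rule sum.cong) auto

lemma lin_eq_zeroI: "(\<And>w. g w \<noteq> 0 \<Longrightarrow> X w = 0) \<Longrightarrow> lin X g = 0"
  unfolding lin_def by (rule sum.neutral) auto

lemma finite_sum_support: assumes "finite I" "\<And>i. i \<in> I \<Longrightarrow> finite {w. g i w \<noteq> (0::int)}"
  shows "finite {w. (\<Sum>i\<in>I. g i w) \<noteq> 0}"
proof -
  have "{w. (\<Sum>i\<in>I. g i w) \<noteq> 0} \<subseteq> (\<Union>i\<in>I. {w. g i w \<noteq> 0})"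
  proof
    fix w assume "w \<in> {w. (\<Sum>i\<in>I. g i w) \<noteq> 0}"
    then have "(\<Sum>i\<in>I. g i w) \<noteq> 0" by simp
    then obtain i where "i \<in> I" "g i w \<noteq> 0" by (meson sum.neutral)
    then show "w \<in> (\<Union>i\<in>I. {w. g i w \<noteq> 0})" by blast
  qed
  then show ?thesis using assms finite_subset by blast
qed

lemma lin_sum: assumes "finite I" "\<And>i. i \<in> I \<Longrightarrow> finite {w. g i w \<noteq> 0}"
  shows "lin X (\<lambda>w. \<Sum>i\<in>I. g i w) = (\<Sum>i\<in>I. lin X (g i))"
  using assms
proof (induction I rule: finite_induct)
  case empty then show ?case by (simp add: lin_zero)
next
  case (insert x F)
  have a: "finite {w. g x w \<noteq> 0}" using insert.prems by simp
  have b: "finite {w. (\<Sum>i\<in>F. g i w) \<noteq> 0}" by (rule finite_sum_support[OF insert.hyps(1)]) (use insert.prems in simp)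
  have "lin X (\<lambda>w. \<Sum>i\<in>insert x F. g i w) = lin X (\<lambda>w. g x w + (\<Sum>i\<in>F. g i w))"
    using insert.hyps by simp
  also have "\<dots> = lin X (g x) + lin X (\<lambda>w. \<Sum>i\<in>F. g i w)" by (rule lin_add[OF a b])
  also have "\<dots> = lin X (g x) + (\<Sum>i\<in>F. lin X (g i))" using insert.IH insert.prems by simp
  finally show ?case using insert.hyps by simp
qed

lemma lin_nonzero_support: "lin (\<lambda>w. Y w u) g \<noteq> 0 \<Longrightarrow> \<exists>w. g w \<noteq> 0 \<and> Y w u \<noteq> 0"
  using lin_eq_zeroI[of g "\<lambda>w. Y w u"] by blast

lemma lin_dlt3: "lin X (\<lambda>u. dlt a u - dlt b u - dlt c u) = X a - X b - X c"
proof -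
  have f: "finite {u. dlt a u - dlt b u \<noteq> 0}" by (rule finite_dlt2_support)
  have "lin X (\<lambda>u. dlt a u - dlt b u - dlt c u) = lin X (\<lambda>u. dlt a u - dlt b u) - lin X (dlt c)"
    by (simp add: lin_diff[OF f finite_dlt_support])
  also have "\<dots> = X a - X b - X c" by (simp add: lin_diff[OF finite_dlt_support finite_dlt_support] lin_dlt)
  finally show ?thesis .
qed

lemma lin_dlt2: "lin X (\<lambda>u. dlt a u - dlt b u) = X a - X b"
  by (simp add: lin_diff[OF finite_dlt_support finite_dlt_support] lin_dlt)

lemma lin_rel_sub_eq_zero: assumes "\<And>h. h \<in> rel_gens Xo \<Longrightarrow> lin X h = 0" "h \<in> rel_sub Xo"
  shows "lin X h = 0"
  using assms(2)
proof (induction rule: rel_sub.induct)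
  case (gen f) then show ?case using assms(1) by blast
next
  case zero then show ?case by (simp add: lin_zero)
next
  case (diff f g) then show ?case by (simp add: lin_diff[OF rel_sub_finite_support[OF diff.hyps(1)] rel_sub_finite_support[OF diff.hyps(2)]])
qed

lemma lin_rel_sub_mem: assumes "\<And>h. h \<in> rel_gens Xo \<Longrightarrow> (\<lambda>u. lin (\<lambda>w. Y w u) h) \<in> rel_sub Xo" "h \<in> rel_sub Xo"
  shows "(\<lambda>u. lin (\<lambda>w. Y w u) h) \<in> rel_sub Xo"
  using assms(2)
proof (induction rule: rel_sub.induct)
  case (gen f) then show ?case using assms(1) by blast
next
  case zero then show ?case by (simp add: lin_zero rel_sub.zero)
next
  case (diff f g)
  have "(\<lambda>u. lin (\<lambda>w. Y w u) f - lin (\<lambda>w. Y w u) g) \<in> rel_sub Xo" using rel_sub.diff[OF diff.IH] .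
  then show ?case by (simp add: lin_diff[OF rel_sub_finite_support[OF diff.hyps(1)] rel_sub_finite_support[OF diff.hyps(2)]])
qed

lemma lin_fun_add: "lin (\<lambda>t. P t + Q t) F = lin P F + lin Q F"
  unfolding lin_def by (simp add: distrib_left sum.distrib)

lemma lin_fun_diff: "lin (\<lambda>t. P t - Q t) F = lin P F - lin Q F"
  unfolding lin_def by (simp add: right_diff_distrib sum_subtractf)

lemma lin_int_eq: "lin (Y :: ('i \<times> 'x) list \<Rightarrow> int) F = (\<Sum>t\<in>{t. F t \<noteq> 0}. F t * Y t)"
  unfolding lin_def by simp

lemma lin_lin: assumes F: "finite {t. F t \<noteq> 0}" and Y: "\<And>t. F t \<noteq> 0 \<Longrightarrow> finite {u. Y t u \<noteq> 0}"
  shows "lin X (\<lambda>u. lin (\<lambda>t. Y t u) F) = lin (\<lambda>t. lin X (Y t)) F"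
proof -
  have "lin X (\<lambda>u. lin (\<lambda>t. Y t u) F) = lin X (\<lambda>u. \<Sum>t\<in>{t. F t \<noteq> 0}. F t * Y t u)"
    by (simp add: lin_int_eq)
  also have "\<dots> = (\<Sum>t\<in>{t. F t \<noteq> 0}. lin X (\<lambda>u. F t * Y t u))"
  proof (rule lin_sum[OF F])
    fix t assume "t \<in> {t. F t \<noteq> 0}"
    then have "finite {u. Y t u \<noteq> 0}" using Y by simp
    then show "finite {u. F t * Y t u \<noteq> 0}" by (rule finite_subset[rotated]) auto
  qed
  also have "\<dots> = (\<Sum>t\<in>{t. F t \<noteq> 0}. of_int (F t) * lin X (Y t))"
    by (rule sum.cong) (auto simp: lin_smult Y)
  also have "\<dots> = lin (\<lambda>t. lin X (Y t)) F" unfolding lin_def ..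
  finally show ?thesis .
qed

lemma rel_sub_lin: assumes F: "finite {t. F t \<noteq> 0}" and D: "\<And>t. F t \<noteq> 0 \<Longrightarrow> D t \<in> rel_sub Xo"
  shows "(\<lambda>u. lin (\<lambda>t. D t u) F) \<in> rel_sub Xo"
proof -
  have "(\<lambda>u. \<Sum>t\<in>{t. F t \<noteq> 0}. F t * D t u) \<in> rel_sub Xo"
    by (rule rel_sub_sum[OF F]) (rule rel_sub_smult, simp add: D)
  then show ?thesis by (simp add: lin_int_eq)
qed

lemma lin_dlt_self: assumes F: "finite {t. F t \<noteq> 0}" shows "lin (\<lambda>t. dlt t u) F = F u"
proof (cases "F u = 0")
  case True
  have "lin (\<lambda>t. dlt t u) F = 0" by (rule lin_eq_zeroI) (use True in \<open>auto simp: dlt_def\<close>)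
  then show ?thesis using True by simp
next
  case False
  have "lin (\<lambda>t. dlt t u) F = (\<Sum>t\<in>{t. F t \<noteq> 0}. F t * dlt t u)" by (simp add: lin_int_eq)
  also have "\<dots> = (\<Sum>t\<in>{u}. F t * dlt t u)"
    by (rule sum.mono_neutral_right) (use F False in \<open>auto simp: dlt_def\<close>)
  finally show ?thesis by (simp add: dlt_def)
qed

lemma lin_dlt_add_lin: assumes F: "finite {t. F t \<noteq> 0}"
  shows "lin X (\<lambda>u. dlt w0 u + lin (\<lambda>t. dlt (A t) u + dlt (B t) u) F) = X w0 + lin (\<lambda>t. X (A t) + X (B t)) F"
proof -
  have sub: "{u. lin (\<lambda>t. dlt (A t) u + dlt (B t) u) F \<noteq> 0} \<subseteq> A ` {t. F t \<noteq> 0} \<union> B ` {t. F t \<noteq> 0}"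
  proof
    fix u assume "u \<in> {u. lin (\<lambda>t. dlt (A t) u + dlt (B t) u) F \<noteq> 0}"
    then obtain t where t: "F t \<noteq> 0" "dlt (A t) u + dlt (B t) u \<noteq> 0"
      using lin_nonzero_support[of "\<lambda>t u. dlt (A t) u + dlt (B t) u" u F] by auto
    then have "u = A t \<or> u = B t" by (auto simp: dlt_def split: if_splits)
    then show "u \<in> A ` {t. F t \<noteq> 0} \<union> B ` {t. F t \<noteq> 0}" using t(1) by blast
  qed
  have fW: "finite {u. lin (\<lambda>t. dlt (A t) u + dlt (B t) u) F \<noteq> 0}"
    by (rule finite_subset[OF sub]) (use F in simp)
  have "lin X (\<lambda>u. dlt w0 u + lin (\<lambda>t. dlt (A t) u + dlt (B t) u) F)
      = lin X (dlt w0) + lin X (\<lambda>u. lin (\<lambda>t. dlt (A t) u + dlt (B t) u) F)"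
    by (rule lin_add[OF finite_dlt_support fW])
  also have "lin X (\<lambda>u. lin (\<lambda>t. dlt (A t) u + dlt (B t) u) F) = lin (\<lambda>t. lin X (\<lambda>u. dlt (A t) u + dlt (B t) u)) F"
  proof (rule lin_lin[OF F])
    fix t
    have "{u. dlt (A t) u + dlt (B t) u \<noteq> 0} \<subseteq> {A t, B t}" by (auto simp: dlt_def split: if_splits)
    then show "finite {u. dlt (A t) u + dlt (B t) u \<noteq> 0}" by (rule finite_subset) simp
  qed
  also have "(\<lambda>t. lin X (\<lambda>u. dlt (A t) u + dlt (B t) u)) = (\<lambda>t. X (A t) + X (B t))"
    by (auto simp: lin_add[OF finite_dlt_support finite_dlt_support] lin_dlt intro!: ext)
  finally show ?thesis by (simp add: lin_dlt)
qed

lemma ZW_fin: "f \<in> ZW Xo \<Longrightarrow> finite {w. f w \<noteq> 0}"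
  by (simp add: ZW_def)

lemma ZW_alt: "f \<in> ZW Xo \<Longrightarrow> f w \<noteq> 0 \<Longrightarrow> alt_word Xo w"
  by (simp add: ZW_def)

lemma ZW_dlt: "alt_word Xo w \<Longrightarrow> dlt w \<in> ZW Xo"
  unfolding ZW_def using finite_dlt_support by (auto simp: dlt_def)

lemma ZW_zero: "(\<lambda>u. 0) \<in> ZW Xo"
  unfolding ZW_def by simp

lemma ZW_add: assumes "f \<in> ZW Xo" "g \<in> ZW Xo" shows "(\<lambda>u. f u + g u) \<in> ZW Xo"
proof -
  have "{w. f w + g w \<noteq> 0} \<subseteq> {w. f w \<noteq> 0} \<union> {w. g w \<noteq> 0}" by auto
  then have "finite {w. f w + g w \<noteq> 0}" using finite_subset finite_UnI[OF ZW_fin[OF assms(1)] ZW_fin[OF assms(2)]] by blast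
  moreover have "alt_word Xo w" if "f w + g w \<noteq> 0" for w
  proof (cases "f w = 0")
    case True then show ?thesis using that ZW_alt[OF assms(2)] by simp
  next
    case False then show ?thesis using ZW_alt[OF assms(1)] by simp
  qed
  ultimately show ?thesis unfolding ZW_def by blast
qed

lemma ZW_lin: assumes "g \<in> ZW Xo" "\<And>w. g w \<noteq> 0 \<Longrightarrow> Y w \<in> ZW Xo"
  shows "(\<lambda>u. lin (\<lambda>w. Y w u) g) \<in> ZW Xo"
proof -
  have sub: "{u. lin (\<lambda>w. Y w u) g \<noteq> 0} \<subseteq> (\<Union>w\<in>{w. g w \<noteq> 0}. {u. Y w u \<noteq> 0})"
  proof
    fix u assume "u \<in> {u. lin (\<lambda>w. Y w u) g \<noteq> 0}"
    then obtain w where "g w \<noteq> 0" "Y w u \<noteq> 0" using lin_nonzero_support[of Y u g] by auto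
    then show "u \<in> (\<Union>w\<in>{w. g w \<noteq> 0}. {u. Y w u \<noteq> 0})" by blast
  qed
  have "finite (\<Union>w\<in>{w. g w \<noteq> 0}. {u. Y w u \<noteq> 0})"
    using ZW_fin[OF assms(1)] ZW_fin[OF assms(2)] by blast
  then have "finite {u. lin (\<lambda>w. Y w u) g \<noteq> 0}" using sub finite_subset by blast
  moreover have "alt_word Xo u" if nz: "lin (\<lambda>w. Y w u) g \<noteq> 0" for u
  proof -
    obtain w where "g w \<noteq> 0" "Y w u \<noteq> 0" using lin_nonzero_support[of Y u g, OF nz] by auto
    then show ?thesis using ZW_alt[OF assms(2)] by blast
  qed
  ultimately show ?thesis unfolding ZW_def by blast
qed

lemma oprod_Nil: "oprod [] = id"
  by (simp add: oprod_def)

lemma oprod_Cons: "oprod (T # Ts) = T \<circ> oprod Ts"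
  by (simp add: oprod_def)

lemma oprod_append: "oprod (xs @ ys) = oprod xs \<circ> oprod ys"
  by (induction xs) (simp_all add: oprod_Nil oprod_Cons)

lemma oprod_map_oprod: "oprod (map (\<lambda>i. oprod (Ts i)) is) = oprod (concat (map Ts is))"
  by (induction "is") (simp_all add: oprod_Nil oprod_Cons oprod_append)

lemma oprod_preserves: "(\<forall>T\<in>set Ts. \<forall>x\<in>P. T x \<in> P) \<Longrightarrow> x \<in> P \<Longrightarrow> oprod Ts x \<in> P"
  by (induction Ts) (auto simp: oprod_Nil oprod_Cons)

lemma oprod_into:
  assumes "\<forall>T\<in>set Ts. \<forall>x\<in>P. T x \<in> P" "\<forall>T\<in>set Ts. \<forall>x\<in>Q. T x \<in> Q" "\<exists>T\<in>set Ts. \<forall>x\<in>P. T x \<in> Q" "x \<in> P"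
  shows "oprod Ts x \<in> Q"
  using assms
proof (induction Ts)
  case Nil then show ?case by simp
next
  case (Cons T Ts)
  show ?case
  proof (cases "\<forall>x\<in>P. T x \<in> Q")
    case True
    have "oprod Ts x \<in> P" using oprod_preserves[of Ts P x] Cons.prems by simp
    then show ?thesis using True by (simp add: oprod_Cons)
  next
    case False
    then have "\<exists>T\<in>set Ts. \<forall>x\<in>P. T x \<in> Q" using Cons.prems(3) by auto
    then have "oprod Ts x \<in> Q" using Cons.IH Cons.prems by simp
    then show ?thesis using Cons.prems(2) by (simp add: oprod_Cons)
  qed
qed

lemma oprod_map_split:
  assumes "\<forall>i\<in>{1..m}. A i = oprod (Ts i)" "1 \<le> a" "a \<le> b" "b \<le> m"
  shows "oprod (map A [1..<m + 1]) = oprod (concat (map Ts [1..<a])) \<circ>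
    oprod (concat (map Ts [a..<Suc b])) \<circ> oprod (concat (map Ts [Suc b..<Suc m]))"
proof -
  have "[1..<m + 1] = [1..<a] @ [a..<m + 1]"
    using upt_add_eq_append[of 1 a "m + 1 - a"] assms by simp
  also have "[a..<m + 1] = [a..<Suc b] @ [Suc b..<Suc m]"
    using upt_add_eq_append[of a "Suc b" "m - b"] assms by simp
  finally have split: "[1..<m + 1] = [1..<a] @ [a..<Suc b] @ [Suc b..<Suc m]" .
  have "map A [1..<m + 1] = map (\<lambda>i. oprod (Ts i)) [1..<m + 1]"
    by (rule map_cong[OF refl]) (use assms(1) in auto)
  then show ?thesis unfolding split
    by (simp only: oprod_map_oprod concat_append map_append oprod_append comp_assoc)
qed

locale free_product =
  fixes e :: "complex \<Rightarrow> 'b::ring_1" and Xo :: "'i \<Rightarrow> ('b, 'x, 'z) bimod_scheme"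
  assumes is_bimod_Xo: "\<And>l. is_bimod e (Xo l)"
begin

section \<open>The left action and the projection on representatives\<close>

lemma alt_word_lactw: "alt_word Xo w \<Longrightarrow> alt_word Xo (lactw Xo c w)"
  by (cases w) (auto simp: alt_word_Cons bm_lact_mem[OF is_bimod_Xo] dest: alt_word_nonempty)

lemma alt_word_Cons_other: "alt_word Xo w \<Longrightarrow> fst (hd w) \<noteq> l \<Longrightarrow> s \<in> bm_car (Xo l) \<Longrightarrow> alt_word Xo ((l, s) # w)"
  by (simp add: alt_word_Cons alt_word_nonempty)

lemma alt_word_tl: "alt_word Xo (p # r) \<Longrightarrow> r \<noteq> [] \<Longrightarrow> alt_word Xo r \<and> fst p \<noteq> fst (hd r)"
  by (simp add: alt_word_Cons)

lemma alt_word_hd: "alt_word Xo (p # r) \<Longrightarrow> snd p \<in> bm_car (Xo (fst p))"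
  by (simp add: alt_word_Cons)

lemma lam_word_other: "w \<noteq> [] \<Longrightarrow> fst (hd w) \<noteq> l \<Longrightarrow> lam_word Xo l a w =
   (0, \<lambda>u. dlt (lactw Xo (fst (a (1, bm_zero (Xo l)))) w) u + dlt ((l, snd (a (1, bm_zero (Xo l)))) # w) u)"
  by (cases w) (simp_all add: lam_word_def Let_def)

lemma lam_word_single: "lam_word Xo l a [(l, \<xi>)] = (fst (a (0, \<xi>)), dlt [(l, snd (a (0, \<xi>)))])"
  by (simp add: lam_word_def Let_def)

lemma lam_word_Cons: "r \<noteq> [] \<Longrightarrow> lam_word Xo l a ((l, \<xi>) # r) =
   (0, \<lambda>u. dlt (lactw Xo (fst (a (0, \<xi>))) r) u + dlt ((l, snd (a (0, \<xi>))) # r) u)"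
  by (simp add: lam_word_def Let_def)

lemma lam_word_fst_nonzero: "w \<noteq> [] \<Longrightarrow> fst (lam_word Xo l a w) \<noteq> 0 \<Longrightarrow> \<exists>\<xi>. w = [(l, \<xi>)]"
proof -
  assume w: "w \<noteq> []" and nz: "fst (lam_word Xo l a w) \<noteq> 0"
  obtain p r where pr: "w = p # r" using w by (cases w) auto
  show ?thesis
  proof (cases "fst p = l")
    case False then show ?thesis using nz pr lam_word_other[of w l a] by simp
  next
    case True
    then have p: "p = (l, snd p)" by (cases p) auto
    show ?thesis
    proof (cases "r = []")
      case True then show ?thesis using pr p by blast
    next
      case False then show ?thesis using nz pr p lam_word_Cons[of r l a "snd p"] by simp
    qed
  qed
qed

lemma lam_word_ZW: assumes op: "is_op (Xo l) a" and w: "alt_word Xo w"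
  shows "snd (lam_word Xo l a w) \<in> ZW Xo"
proof -
  obtain p r where pr: "w = p # r" using alt_word_nonempty[OF w] by (cases w) auto
  have s1: "snd (a (1, bm_zero (Xo l))) \<in> bm_car (Xo l)" using op_snd_mem[OF is_bimod_Xo op] bm_zero_mem[OF is_bimod_Xo] by blast
  show ?thesis
  proof (cases "fst p = l")
    case False
    have "snd (lam_word Xo l a w) = (\<lambda>u. dlt (lactw Xo (fst (a (1, bm_zero (Xo l)))) w) u + dlt ((l, snd (a (1, bm_zero (Xo l)))) # w) u)"
      using lam_word_other[of w l a] pr False by simp
    moreover have h: "alt_word Xo ((l, snd (a (1, bm_zero (Xo l)))) # w)" using alt_word_Cons_other[OF w] pr False s1 by simp
    ultimately show ?thesis using ZW_add[OF ZW_dlt[OF alt_word_lactw[OF w]] ZW_dlt[OF h]] by simp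
  next
    case True
    then have p: "p = (l, snd p)" by (cases p) auto
    have sp: "snd p \<in> bm_car (Xo l)" using alt_word_hd[of p r] w pr True by simp
    have s2: "snd (a (0, snd p)) \<in> bm_car (Xo l)" using op_snd_mem[OF is_bimod_Xo op sp] .
    show ?thesis
    proof (cases "r = []")
      case True
      then show ?thesis using pr p lam_word_single[of l a "snd p"] ZW_dlt alt_word_single s2 by (metis snd_conv)
    next
      case False
      have ar: "alt_word Xo r" "fst (hd r) \<noteq> l" using alt_word_tl[of p r] w pr False True by auto
      have "snd (lam_word Xo l a w) = (\<lambda>u. dlt (lactw Xo (fst (a (0, snd p))) r) u + dlt ((l, snd (a (0, snd p))) # r) u)"
        using lam_word_Cons[OF False, of l a "snd p"] pr p by (metis snd_conv)
      moreover have h: "alt_word Xo ((l, snd (a (0, snd p))) # r)" using alt_word_Cons_other[OF ar s2] .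
      ultimately show ?thesis using ZW_add[OF ZW_dlt[OF alt_word_lactw[OF ar(1)]] ZW_dlt[OF h]] by simp
    qed
  qed
qed

lemma rel_sub_additivity_lactw: assumes w: "alt_word Xo w" and j: "j < length w"
    and x: "\<xi> \<in> bm_car (Xo (fst (w ! j)))" "\<eta> \<in> bm_car (Xo (fst (w ! j)))"
  shows "(\<lambda>u. dlt (lactw Xo c (w[j := (fst (w ! j), bm_add (Xo (fst (w ! j))) \<xi> \<eta>)])) u
     - dlt (lactw Xo c (w[j := (fst (w ! j), \<xi>)])) u - dlt (lactw Xo c (w[j := (fst (w ! j), \<eta>)])) u) \<in> rel_sub Xo"
proof -
  obtain p r where pr: "w = p # r" using alt_word_nonempty[OF w] by (cases w) auto
  show ?thesis
  proof (cases j)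
    case 0
    let ?i = "fst p"
    have xx: "\<xi> \<in> bm_car (Xo ?i)" "\<eta> \<in> bm_car (Xo ?i)" using x pr 0 by auto
    have a: "alt_word Xo ((?i, bm_lact (Xo ?i) c \<xi>) # r)"
      using w pr xx bm_lact_mem[OF is_bimod_Xo] by (simp add: alt_word_Cons)
    have "(\<lambda>u. dlt ((?i, bm_add (Xo ?i) (bm_lact (Xo ?i) c \<xi>) (bm_lact (Xo ?i) c \<eta>)) # r) u
        - dlt ((?i, bm_lact (Xo ?i) c \<xi>) # r) u - dlt ((?i, bm_lact (Xo ?i) c \<eta>) # r) u) \<in> rel_sub Xo"
      using rel_sub_additivity[where Xo=Xo and w = "(?i, bm_lact (Xo ?i) c \<xi>) # r" and j = 0
          and \<xi> = "bm_lact (Xo ?i) c \<xi>" and \<eta> = "bm_lact (Xo ?i) c \<eta>"] a xx bm_lact_mem[OF is_bimod_Xo] by simp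
    then show ?thesis using pr 0 bm_lact_add[OF is_bimod_Xo] xx by simp
  next
    case (Suc j')
    have a: "alt_word Xo (lactw Xo c w)" by (rule alt_word_lactw[OF w])
    have j': "Suc j' < length (lactw Xo c w)" using j Suc pr by simp
    have "fst (lactw Xo c w ! Suc j') = fst (w ! j)" using pr Suc by simp
    then show ?thesis
      using rel_sub_additivity[OF a j', where \<xi> = \<xi> and \<eta> = \<eta>] x pr Suc by simp
  qed
qed

lemma rel_sub_balancing_lactw: assumes w: "alt_word Xo w" and j: "Suc j < length w"
  shows "(\<lambda>u. dlt (lactw Xo c (w[j := (fst (w ! j), bm_ract (Xo (fst (w ! j))) (snd (w ! j)) b)])) u
     - dlt (lactw Xo c (w[Suc j := (fst (w ! Suc j), bm_lact (Xo (fst (w ! Suc j))) b (snd (w ! Suc j)))])) u) \<in> rel_sub Xo"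
proof -
  obtain p r where pr: "w = p # r" using alt_word_nonempty[OF w] by (cases w) auto
  show ?thesis
  proof (cases j)
    case 0
    obtain q r' where qr: "r = q # r'" using j pr 0 by (cases r) auto
    let ?i = "fst p"
    have sp: "snd p \<in> bm_car (Xo ?i)" using w pr by (simp add: alt_word_Cons)
    have a: "alt_word Xo ((?i, bm_lact (Xo ?i) c (snd p)) # q # r')"
      using w pr qr sp bm_lact_mem[OF is_bimod_Xo] by (simp add: alt_word_Cons)
    have "(\<lambda>u. dlt ((?i, bm_ract (Xo ?i) (bm_lact (Xo ?i) c (snd p)) b) # q # r') u
        - dlt ((?i, bm_lact (Xo ?i) c (snd p)) # (fst q, bm_lact (Xo (fst q)) b (snd q)) # r') u) \<in> rel_sub Xo"
      using rel_sub_balancing[where Xo=Xo and w = "(?i, bm_lact (Xo ?i) c (snd p)) # q # r'" and j = 0 and b = b] a by simp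
    then show ?thesis using pr qr 0 bm_lact_ract[OF is_bimod_Xo sp] by simp
  next
    case (Suc j')
    have a: "alt_word Xo (lactw Xo c w)" by (rule alt_word_lactw[OF w])
    have j': "Suc (Suc j') < length (lactw Xo c w)" using j Suc pr by simp
    show ?thesis
      using rel_sub_balancing[OF a j', where b = b] pr Suc by simp
  qed
qed

lemma lam_word_update_other: assumes "w \<noteq> []" "fst (hd w) \<noteq> l"
  shows "lam_word Xo l a (w[k := (fst (w ! k), v)]) =
    (0, \<lambda>u. dlt (lactw Xo (fst (a (1, bm_zero (Xo l)))) (w[k := (fst (w ! k), v)])) u
      + dlt ((l, snd (a (1, bm_zero (Xo l)))) # w[k := (fst (w ! k), v)]) u)"
  by (rule lam_word_other) (use assms fst_hd_list_update[OF assms(1)] in simp_all)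

lemma lam_word_additivity_first:
  assumes op: "is_op (Xo l) a" and w: "alt_word Xo ((l, \<zeta>) # r)"
    and x: "\<xi> \<in> bm_car (Xo l)" "\<eta> \<in> bm_car (Xo l)"
  shows "fst (lam_word Xo l a ((l, bm_add (Xo l) \<xi> \<eta>) # r)) - fst (lam_word Xo l a ((l, \<xi>) # r))
      - fst (lam_word Xo l a ((l, \<eta>) # r)) = 0
    \<and> (\<lambda>u. snd (lam_word Xo l a ((l, bm_add (Xo l) \<xi> \<eta>) # r)) u - snd (lam_word Xo l a ((l, \<xi>) # r)) u
      - snd (lam_word Xo l a ((l, \<eta>) # r)) u) \<in> rel_sub Xo"
proof -
  let ?f2 = "fst (a (0, \<xi>))" and ?f3 = "fst (a (0, \<eta>))"
  let ?s2 = "snd (a (0, \<xi>))" and ?s3 = "snd (a (0, \<eta>))"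
  have sp: "?s2 \<in> bm_car (Xo l)" "?s3 \<in> bm_car (Xo l)" using op_snd_mem[OF is_bimod_Xo op] x by auto
  have aadd: "a (0, bm_add (Xo l) \<xi> \<eta>) = (?f2 + ?f3, bm_add (Xo l) ?s2 ?s3)"
    using op_add[OF is_bimod_Xo op x, of 0 0] by simp
  show ?thesis
  proof (cases "r = []")
    case True
    have "alt_word Xo [(l, ?s2)]" by (simp add: alt_word_single sp)
    from rel_sub_additivity[OF this, where j = 0 and \<xi> = ?s2 and \<eta> = ?s3]
    show ?thesis using sp unfolding True by (simp add: lam_word_single aadd)
  next
    case False
    obtain q r' where qr: "r = q # r'" using False by (cases r) auto
    have ar: "alt_word Xo r" "fst (hd r) \<noteq> l" using alt_word_tl[OF w False] by auto
    have sq: "snd q \<in> bm_car (Xo (fst q))" using ar qr alt_word_hd by blast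
    have "alt_word Xo ((fst q, bm_lact (Xo (fst q)) ?f2 (snd q)) # r')"
      using ar(1) qr sq bm_lact_mem[OF is_bimod_Xo] by (simp add: alt_word_Cons)
    from rel_sub_additivity[OF this, where j = 0 and \<xi> = "bm_lact (Xo (fst q)) ?f2 (snd q)"
        and \<eta> = "bm_lact (Xo (fst q)) ?f3 (snd q)"]
    have H1: "(\<lambda>u. dlt (lactw Xo (?f2 + ?f3) r) u - dlt (lactw Xo ?f2 r) u - dlt (lactw Xo ?f3 r) u) \<in> rel_sub Xo"
      using sq bm_lact_mem[OF is_bimod_Xo] bm_lact_scalar_add[OF is_bimod_Xo sq] unfolding qr by simp
    from rel_sub_additivity[OF alt_word_Cons_other[OF ar sp(1)], where j = 0 and \<xi> = ?s2 and \<eta> = ?s3]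
    have H2: "(\<lambda>u. dlt ((l, bm_add (Xo l) ?s2 ?s3) # r) u - dlt ((l, ?s2) # r) u - dlt ((l, ?s3) # r) u) \<in> rel_sub Xo"
      using sp by simp
    show ?thesis using rel_sub_add3[OF H1 H2] by (simp add: lam_word_Cons[OF False] aadd)
  qed
qed

lemma lam_word_additivity: assumes op: "is_op (Xo l) a" and w: "alt_word Xo w" and j: "j < length w"
    and x: "\<xi> \<in> bm_car (Xo (fst (w ! j)))" "\<eta> \<in> bm_car (Xo (fst (w ! j)))"
  defines "w1 \<equiv> w[j := (fst (w ! j), bm_add (Xo (fst (w ! j))) \<xi> \<eta>)]"
    and "w2 \<equiv> w[j := (fst (w ! j), \<xi>)]" and "w3 \<equiv> w[j := (fst (w ! j), \<eta>)]"
  shows "fst (lam_word Xo l a w1) - fst (lam_word Xo l a w2) - fst (lam_word Xo l a w3) = 0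
    \<and> (\<lambda>u. snd (lam_word Xo l a w1) u - snd (lam_word Xo l a w2) u - snd (lam_word Xo l a w3) u) \<in> rel_sub Xo"
proof -
  obtain p r where pr: "w = p # r" using alt_word_nonempty[OF w] by (cases w) auto
  let ?s1 = "snd (a (1, bm_zero (Xo l)))"
  show ?thesis
  proof (cases "fst p = l")
    case False
    have ne: "w \<noteq> []" "fst (hd w) \<noteq> l" using pr False by auto
    have s1: "?s1 \<in> bm_car (Xo l)" using op_snd_mem[OF is_bimod_Xo op] bm_zero_mem[OF is_bimod_Xo] by blast
    note H1 = rel_sub_additivity_lactw[OF w j x, where c = "fst (a (1, bm_zero (Xo l)))"]
    have "(\<lambda>u. dlt ((l, ?s1) # w1) u - dlt ((l, ?s1) # w2) u - dlt ((l, ?s1) # w3) u) \<in> rel_sub Xo"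
      using rel_sub_additivity[OF alt_word_Cons_other[OF w ne(2) s1], where j = "Suc j" and \<xi> = \<xi> and \<eta> = \<eta>] j x
      unfolding w1_def w2_def w3_def by simp
    from rel_sub_add3[OF H1 this] show ?thesis
      unfolding w1_def w2_def w3_def lam_word_update_other[OF ne] by simp
  next
    case True
    then have p: "p = (l, snd p)" by (cases p) auto
    show ?thesis
    proof (cases j)
      case 0
      have "\<xi> \<in> bm_car (Xo l)" "\<eta> \<in> bm_car (Xo l)" using x pr 0 True by auto
      moreover have "w1 = (l, bm_add (Xo l) \<xi> \<eta>) # r" "w2 = (l, \<xi>) # r" "w3 = (l, \<eta>) # r"
        unfolding w1_def w2_def w3_def using pr 0 True by simp_all
      ultimately show ?thesis using lam_word_additivity_first[OF op, of "snd p" r] w pr p by simp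
    next
      case (Suc j')
      have rne: "r \<noteq> []" using j pr Suc by auto
      have ar: "alt_word Xo r" "fst (hd r) \<noteq> l" using alt_word_tl[of p r] w pr rne True by auto
      have j': "j' < length r" using j pr Suc by simp
      have x': "\<xi> \<in> bm_car (Xo (fst (r ! j')))" "\<eta> \<in> bm_car (Xo (fst (r ! j')))" using x pr Suc by auto
      let ?s = "snd (a (0, snd p))"
      have sp: "snd p \<in> bm_car (Xo l)" using w pr True alt_word_hd by fastforce
      have ss: "?s \<in> bm_car (Xo l)" using op_snd_mem[OF is_bimod_Xo op sp] .
      have ws: "w1 = (l, snd p) # r[j' := (fst (r ! j'), bm_add (Xo (fst (r ! j'))) \<xi> \<eta>)]"
         "w2 = (l, snd p) # r[j' := (fst (r ! j'), \<xi>)]" "w3 = (l, snd p) # r[j' := (fst (r ! j'), \<eta>)]"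
        unfolding w1_def w2_def w3_def using pr Suc p by (metis list_update_code(3) nth_Cons_Suc)+
      note H1 = rel_sub_additivity_lactw[OF ar(1) j' x', where c = "fst (a (0, snd p))"]
      have "(\<lambda>u. dlt ((l, ?s) # r[j' := (fst (r ! j'), bm_add (Xo (fst (r ! j'))) \<xi> \<eta>)]) u
          - dlt ((l, ?s) # r[j' := (fst (r ! j'), \<xi>)]) u - dlt ((l, ?s) # r[j' := (fst (r ! j'), \<eta>)]) u) \<in> rel_sub Xo"
        using rel_sub_additivity[OF alt_word_Cons_other[OF ar ss], where j = "Suc j'" and \<xi> = \<xi> and \<eta> = \<eta>] x' j'
        by simp
      from rel_sub_add3[OF H1 this] show ?thesis using rne unfolding ws by (simp add: lam_word_Cons)
    qed
  qed
qed

lemma lam_word_balancing_first: fixes b :: 'b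
  assumes op: "is_op (Xo l) a" and w: "alt_word Xo ((l, \<zeta>) # q # r)"
  shows "fst (lam_word Xo l a ((l, bm_ract (Xo l) \<zeta> b) # q # r))
      - fst (lam_word Xo l a ((l, \<zeta>) # (fst q, bm_lact (Xo (fst q)) b (snd q)) # r)) = 0
    \<and> (\<lambda>u. snd (lam_word Xo l a ((l, bm_ract (Xo l) \<zeta> b) # q # r)) u
      - snd (lam_word Xo l a ((l, \<zeta>) # (fst q, bm_lact (Xo (fst q)) b (snd q)) # r)) u) \<in> rel_sub Xo"
proof -
  let ?f = "fst (a (0, \<zeta>))" and ?s = "snd (a (0, \<zeta>))"
  have sp: "\<zeta> \<in> bm_car (Xo l)" using alt_word_hd[OF w] by simp
  have ss: "?s \<in> bm_car (Xo l)" using op_snd_mem[OF is_bimod_Xo op sp] .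
  have ar: "alt_word Xo (q # r)" "fst q \<noteq> l" using alt_word_tl[OF w] by auto
  have sq: "snd q \<in> bm_car (Xo (fst q))" using alt_word_hd[OF ar(1)] .
  have "alt_word Xo ((l, ?s) # q # r)" using alt_word_Cons_other[OF ar(1)] ar(2) ss by simp
  from rel_sub_balancing[OF this, where j = 0 and b = b]
  have "(\<lambda>u. dlt ((l, bm_ract (Xo l) ?s b) # q # r) u - dlt ((l, ?s) # (fst q, bm_lact (Xo (fst q)) b (snd q)) # r) u)
      \<in> rel_sub Xo"
    by simp
  moreover have "a (0, bm_ract (Xo l) \<zeta> b) = (?f * b, bm_ract (Xo l) ?s b)"
    by (rule op_reduced_ract[OF is_bimod_Xo op sp])
  ultimately show ?thesis using rel_sub_add_same by (simp add: lam_word_Cons bm_lact_mult[OF is_bimod_Xo sq])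
qed

lemma lam_word_balancing: fixes b :: 'b assumes op: "is_op (Xo l) a" and w: "alt_word Xo w" and j: "Suc j < length w"
  defines "w1 \<equiv> w[j := (fst (w ! j), bm_ract (Xo (fst (w ! j))) (snd (w ! j)) b)]"
    and "w2 \<equiv> w[Suc j := (fst (w ! Suc j), bm_lact (Xo (fst (w ! Suc j))) b (snd (w ! Suc j)))]"
  shows "fst (lam_word Xo l a w1) - fst (lam_word Xo l a w2) = 0
    \<and> (\<lambda>u. snd (lam_word Xo l a w1) u - snd (lam_word Xo l a w2) u) \<in> rel_sub Xo"
proof -
  obtain p r where pr: "w = p # r" using alt_word_nonempty[OF w] by (cases w) auto
  let ?s1 = "snd (a (1, bm_zero (Xo l)))"
  show ?thesis
  proof (cases "fst p = l")
    case False
    have ne: "w \<noteq> []" "fst (hd w) \<noteq> l" using pr False by auto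
    have s1: "?s1 \<in> bm_car (Xo l)" using op_snd_mem[OF is_bimod_Xo op] bm_zero_mem[OF is_bimod_Xo] by blast
    note H1 = rel_sub_balancing_lactw[OF w j, where c = "fst (a (1, bm_zero (Xo l)))" and b = b]
    have "(\<lambda>u. dlt ((l, ?s1) # w1) u - dlt ((l, ?s1) # w2) u) \<in> rel_sub Xo"
      using rel_sub_balancing[OF alt_word_Cons_other[OF w ne(2) s1], where j = "Suc j" and b = b] j
      unfolding w1_def w2_def by simp
    from rel_sub_add2[OF H1 this] show ?thesis
      unfolding w1_def w2_def lam_word_update_other[OF ne] by simp
  next
    case True
    then have p: "p = (l, snd p)" by (cases p) auto
    have sp: "snd p \<in> bm_car (Xo l)" using w pr True alt_word_hd by fastforce
    let ?f = "fst (a (0, snd p))" and ?s = "snd (a (0, snd p))"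
    have ss: "?s \<in> bm_car (Xo l)" using op_snd_mem[OF is_bimod_Xo op sp] .
    have rne: "r \<noteq> []" using j pr by auto
    have ar: "alt_word Xo r" "fst (hd r) \<noteq> l" using alt_word_tl[of p r] w pr rne True by auto
    have a2: "alt_word Xo ((l, ?s) # r)" using alt_word_Cons_other[OF ar ss] .
    show ?thesis
    proof (cases j)
      case 0
      obtain q r' where qr: "r = q # r'" using rne by (cases r) auto
      have "w1 = (l, bm_ract (Xo l) (snd p) b) # q # r'"
          "w2 = (l, snd p) # (fst q, bm_lact (Xo (fst q)) b (snd q)) # r'"
        unfolding w1_def w2_def using pr qr 0 True p by simp_all
      then show ?thesis using lam_word_balancing_first[OF op, of "snd p" q r' b] w pr qr p by simp
    next
      case (Suc j')
      have j': "Suc j' < length r" using j pr Suc by simp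
      have ws: "w1 = (l, snd p) # r[j' := (fst (r ! j'), bm_ract (Xo (fst (r ! j'))) (snd (r ! j')) b)]"
         "w2 = (l, snd p) # r[Suc j' := (fst (r ! Suc j'), bm_lact (Xo (fst (r ! Suc j'))) b (snd (r ! Suc j')))]"
        unfolding w1_def w2_def using pr Suc p by simp_all
      note H1 = rel_sub_balancing_lactw[OF ar(1) j', where c = ?f and b = b]
      have "(\<lambda>u. dlt ((l, ?s) # r[j' := (fst (r ! j'), bm_ract (Xo (fst (r ! j'))) (snd (r ! j')) b)]) u
          - dlt ((l, ?s) # r[Suc j' := (fst (r ! Suc j'), bm_lact (Xo (fst (r ! Suc j'))) b (snd (r ! Suc j')))]) u)
          \<in> rel_sub Xo"
        using rel_sub_balancing[OF a2, where j = "Suc j'" and b = b] j' by simp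
      from rel_sub_add2[OF H1 this] show ?thesis using rne unfolding ws by (simp add: lam_word_Cons)
    qed
  qed
qed

lemma lam_word_rel_gens: assumes op: "is_op (Xo l) a" and h: "h \<in> rel_gens Xo"
  shows "lin (\<lambda>w. fst (lam_word Xo l a w)) h = 0 \<and> (\<lambda>u. lin (\<lambda>w. snd (lam_word Xo l a w) u) h) \<in> rel_sub Xo"
  using h unfolding rel_gens_def
proof (elim UnE CollectE exE conjE)
  fix w j \<xi> \<eta>
  assume hh: "h = (\<lambda>u. dlt (w[j := (fst (w ! j), bm_add (Xo (fst (w ! j))) \<xi> \<eta>)]) u
            - dlt (w[j := (fst (w ! j), \<xi>)]) u - dlt (w[j := (fst (w ! j), \<eta>)]) u)"
    and c: "alt_word Xo w" "j < length w" "\<xi> \<in> bm_car (Xo (fst (w ! j)))" "\<eta> \<in> bm_car (Xo (fst (w ! j)))"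
  show ?thesis using lam_word_additivity[OF op c] unfolding hh lin_dlt3 by simp
next
  fix w j b
  assume hh: "h = (\<lambda>u. dlt (w[j := (fst (w ! j), bm_ract (Xo (fst (w ! j))) (snd (w ! j)) b)]) u
            - dlt (w[Suc j := (fst (w ! Suc j), bm_lact (Xo (fst (w ! Suc j))) b (snd (w ! Suc j)))]) u)"
    and c: "alt_word Xo w" "Suc j < length w"
  show ?thesis using lam_word_balancing[OF op c, where b = b] unfolding hh lin_dlt2 by simp
qed

lemma lam_word_rel_sub: assumes op: "is_op (Xo l) a" and h: "h \<in> rel_sub Xo"
  shows "lin (\<lambda>w. fst (lam_word Xo l a w)) h = 0" "(\<lambda>u. lin (\<lambda>w. snd (lam_word Xo l a w) u) h) \<in> rel_sub Xo"
  using lin_rel_sub_eq_zero[OF conjunct1[OF lam_word_rel_gens[OF op]] h]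
    lin_rel_sub_mem[OF conjunct2[OF lam_word_rel_gens[OF op]] h] by simp_all

lemma lam_cls: assumes op: "is_op (Xo l) a" and f: "f \<in> ZW Xo"
  shows "lam Xo l a (b, cls Xo f) = (fst (a (b, bm_zero (Xo l))) + lin (\<lambda>w. fst (lam_word Xo l a w)) f,
     cls Xo (\<lambda>u. dlt [(l, snd (a (b, bm_zero (Xo l))))] u + lin (\<lambda>w. snd (lam_word Xo l a w) u) f))"
proof -
  have mem: "(b, cls Xo f) \<in> FPcar Xo" unfolding FPcar_def using f by blast
  define g where "g = rep Xo (cls Xo f)"
  have g: "g \<in> ZW Xo" "(\<lambda>u. f u - g u) \<in> rel_sub Xo" using rep_cls[OF f] g_def by auto
  have lam: "lam Xo l a (b, cls Xo f) = (fst (a (b, bm_zero (Xo l))) + lin (\<lambda>w. fst (lam_word Xo l a w)) g,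
     cls Xo (\<lambda>u. dlt [(l, snd (a (b, bm_zero (Xo l))))] u + lin (\<lambda>w. snd (lam_word Xo l a w) u) g))"
    unfolding lam_def restr_def Let_def lin_def using mem g_def by simp
  have ff: "finite {w. f w \<noteq> 0}" "finite {w. g w \<noteq> 0}" using f g(1) ZW_fin by auto
  have 1: "lin (\<lambda>w. fst (lam_word Xo l a w)) g = lin (\<lambda>w. fst (lam_word Xo l a w)) f"
    using lam_word_rel_sub(1)[OF op g(2)] by (simp add: lin_diff[OF ff])
  have 2: "(\<lambda>u. lin (\<lambda>w. snd (lam_word Xo l a w) u) f - lin (\<lambda>w. snd (lam_word Xo l a w) u) g) \<in> rel_sub Xo"
    using lam_word_rel_sub(2)[OF op g(2)] by (simp add: lin_diff[OF ff])
  have 3: "cls Xo (\<lambda>u. dlt [(l, snd (a (b, bm_zero (Xo l))))] u + lin (\<lambda>w. snd (lam_word Xo l a w) u) g)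
     = cls Xo (\<lambda>u. dlt [(l, snd (a (b, bm_zero (Xo l))))] u + lin (\<lambda>w. snd (lam_word Xo l a w) u) f)"
    by (rule cls_eqI) (rule rel_sub_cong[OF rel_sub_uminus[OF 2]], simp)
  show ?thesis using lam 1 3 by simp
qed

definition single_part :: "'i \<Rightarrow> (('i \<times> 'x) list \<Rightarrow> int) \<Rightarrow> (('i \<times> 'x) list \<Rightarrow> int)" where
  "single_part l f = (\<lambda>w. if (\<exists>\<xi>. w = [(l, \<xi>)]) then f w else 0)"

lemma single_list_update_iff: "j < length w \<Longrightarrow> (\<exists>\<xi>. w[j := (fst (w ! j), v)] = [(l, \<xi>)]) \<longleftrightarrow> (\<exists>\<xi>. w = [(l, \<xi>)])"
  by (cases w; cases j) auto

lemma single_part_eq_if: assumes "\<And>u. h u \<noteq> 0 \<Longrightarrow> ((\<exists>\<xi>. u = [(l, \<xi>)]) \<longleftrightarrow> P)"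
  shows "single_part l h = (if P then h else (\<lambda>_. 0))"
proof -
  have "(if (\<exists>\<xi>. u = [(l, \<xi>)]) then h u else 0) = (if P then h u else 0)" for u
  proof (cases "h u = 0")
    case True then show ?thesis by simp
  next
    case False then show ?thesis using assms[OF False] by simp
  qed
  then show ?thesis unfolding single_part_def by (auto intro!: ext)
qed

lemma single_part_rel_gens: assumes "h \<in> rel_gens Xo" shows "single_part l h \<in> rel_sub Xo"
  using assms unfolding rel_gens_def
proof (elim UnE CollectE exE conjE)
  fix w j \<xi> \<eta>
  assume hh: "h = (\<lambda>u. dlt (w[j := (fst (w ! j), bm_add (Xo (fst (w ! j))) \<xi> \<eta>)]) u
            - dlt (w[j := (fst (w ! j), \<xi>)]) u - dlt (w[j := (fst (w ! j), \<eta>)]) u)"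
    and c: "alt_word Xo w" "j < length w" "\<xi> \<in> bm_car (Xo (fst (w ! j)))" "\<eta> \<in> bm_car (Xo (fst (w ! j)))"
  have "single_part l h = (if (\<exists>\<xi>. w = [(l, \<xi>)]) then h else (\<lambda>_. 0))"
  proof (rule single_part_eq_if)
    fix u assume nz: "h u \<noteq> 0"
    have "h u = 0" if "u \<noteq> w[j := (fst (w ! j), bm_add (Xo (fst (w ! j))) \<xi> \<eta>)]" "u \<noteq> w[j := (fst (w ! j), \<xi>)]"
      "u \<noteq> w[j := (fst (w ! j), \<eta>)]" using that by (simp add: hh dlt_def)
    then have "u = w[j := (fst (w ! j), bm_add (Xo (fst (w ! j))) \<xi> \<eta>)] \<or> u = w[j := (fst (w ! j), \<xi>)]
      \<or> u = w[j := (fst (w ! j), \<eta>)]" using nz by blast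
    then show "(\<exists>\<xi>. u = [(l, \<xi>)]) \<longleftrightarrow> (\<exists>\<xi>. w = [(l, \<xi>)])"
      by (elim disjE) (simp_all only: single_list_update_iff[OF c(2)])
  qed
  moreover have "h \<in> rel_sub Xo" using rel_sub_additivity[OF c] hh by simp
  ultimately show ?thesis by (simp add: rel_sub.zero)
next
  fix w j b
  assume hh: "h = (\<lambda>u. dlt (w[j := (fst (w ! j), bm_ract (Xo (fst (w ! j))) (snd (w ! j)) b)]) u
            - dlt (w[Suc j := (fst (w ! Suc j), bm_lact (Xo (fst (w ! Suc j))) b (snd (w ! Suc j)))]) u)"
    and c: "alt_word Xo w" "Suc j < length w"
  have "single_part l h = (if False then h else (\<lambda>_. 0))"
  proof (rule single_part_eq_if)
    fix u assume nz: "h u \<noteq> 0"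
    have "h u = 0" if "u \<noteq> w[j := (fst (w ! j), bm_ract (Xo (fst (w ! j))) (snd (w ! j)) b)]"
      "u \<noteq> w[Suc j := (fst (w ! Suc j), bm_lact (Xo (fst (w ! Suc j))) b (snd (w ! Suc j)))]"
      using that by (simp add: hh dlt_def)
    then have "length u = length w" using nz by fastforce
    then show "(\<exists>\<xi>. u = [(l, \<xi>)]) \<longleftrightarrow> False" using c(2) by auto
  qed
  then show ?thesis by (simp add: rel_sub.zero)
qed

lemma single_part_rel_sub: "h \<in> rel_sub Xo \<Longrightarrow> single_part l h \<in> rel_sub Xo"
proof (induction rule: rel_sub.induct)
  case (gen f) then show ?case by (rule single_part_rel_gens)
next
  case zero then show ?case by (simp add: single_part_def rel_sub.zero)
next
  case (diff f g)
  have "single_part l (\<lambda>u. f u - g u) = (\<lambda>u. single_part l f u - single_part l g u)" unfolding single_part_def by auto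
  then show ?case using rel_sub.diff[OF diff.IH] by simp
qed

lemma single_part_ZW: "f \<in> ZW Xo \<Longrightarrow> single_part l f \<in> ZW Xo"
proof -
  assume f: "f \<in> ZW Xo"
  have "{w. single_part l f w \<noteq> 0} \<subseteq> {w. f w \<noteq> 0}" unfolding single_part_def by auto
  then have "finite {w. single_part l f w \<noteq> 0}" using ZW_fin[OF f] finite_subset by blast
  moreover have "\<forall>w. single_part l f w \<noteq> 0 \<longrightarrow> alt_word Xo w" using ZW_alt[OF f] unfolding single_part_def by auto
  ultimately show ?thesis unfolding ZW_def by blast
qed

lemma Ppr_cls: assumes f: "f \<in> ZW Xo" shows "Ppr Xo l (b, cls Xo f) = (b, cls Xo (single_part l f))"
proof -
  have mem: "(b, cls Xo f) \<in> FPcar Xo" unfolding FPcar_def using f by blast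
  define g where "g = rep Xo (cls Xo f)"
  have g: "g \<in> ZW Xo" "(\<lambda>u. f u - g u) \<in> rel_sub Xo" using rep_cls[OF f] g_def by auto
  have P: "Ppr Xo l (b, cls Xo f) = (b, cls Xo (single_part l g))"
    unfolding Ppr_def restr_def single_part_def g_def by (simp only: if_P[OF mem] snd_conv fst_conv)
  have "single_part l (\<lambda>u. f u - g u) = (\<lambda>u. single_part l f u - single_part l g u)" unfolding single_part_def by auto
  then have "(\<lambda>u. single_part l f u - single_part l g u) \<in> rel_sub Xo" using single_part_rel_sub[OF g(2), of l] by simp
  then have "(\<lambda>u. - (single_part l f u - single_part l g u)) \<in> rel_sub Xo" by (rule rel_sub_uminus)
  then have D: "(\<lambda>u. single_part l g u - single_part l f u) \<in> rel_sub Xo" by simp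
  show ?thesis using P cls_eqI[OF D] by simp
qed

lemma dlt_zero_letter: assumes "alt_word Xo ((i, bm_zero (Xo i)) # r)" shows "dlt ((i, bm_zero (Xo i)) # r) \<in> rel_sub Xo"
proof -
  have z: "bm_zero (Xo i) \<in> bm_car (Xo i)" by (rule bm_zero_mem[OF is_bimod_Xo])
  have zz: "bm_add (Xo i) (bm_zero (Xo i)) (bm_zero (Xo i)) = bm_zero (Xo i)" using bm_add_zero_left[OF is_bimod_Xo z] .
  have "(\<lambda>u. dlt ((i, bm_zero (Xo i)) # r) u - dlt ((i, bm_zero (Xo i)) # r) u - dlt ((i, bm_zero (Xo i)) # r) u) \<in> rel_sub Xo"
    using rel_sub_additivity[OF assms, where j = 0 and \<xi> = "bm_zero (Xo i)" and \<eta> = "bm_zero (Xo i)"] z zz by simp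
  from rel_sub_uminus[OF this] show ?thesis by (simp add: fun_eq_iff)
qed

lemma dlt_zero_single: "dlt [(l, bm_zero (Xo l))] \<in> rel_sub Xo"
  using dlt_zero_letter[of l "[]"] by (simp add: alt_word_single bm_zero_mem[OF is_bimod_Xo])

lemma length_lactw: "length (lactw Xo c w) = length w"
  by (cases w) (auto simp: lactw_def)

lemma fst_hd_lactw: "w \<noteq> [] \<Longrightarrow> fst (hd (lactw Xo c w)) = fst (hd w)"
  by (cases w) auto

lemma dlt_add_nonzero: "dlt A u + dlt B u \<noteq> 0 \<Longrightarrow> u = A \<or> u = B"
  by (auto simp: dlt_def split: if_splits)

lemma FPcar_iff: "x \<in> FPcar Xo \<longleftrightarrow> (\<exists>b f. f \<in> ZW Xo \<and> x = (b, cls Xo f))"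
  unfolding FPcar_def mem_Collect_eq by auto

lemma lam_reduced_ZW: assumes op: "is_op (Xo l) a" and f: "f \<in> ZW Xo" and s: "s \<in> bm_car (Xo l)"
  shows "(\<lambda>u. dlt [(l, s)] u + lin (\<lambda>w. snd (lam_word Xo l a w) u) f) \<in> ZW Xo"
proof -
  have 1: "dlt [(l, s)] \<in> ZW Xo" by (rule ZW_dlt) (simp add: alt_word_single s)
  have 2: "(\<lambda>u. lin (\<lambda>w. snd (lam_word Xo l a w) u) f) \<in> ZW Xo"
    by (rule ZW_lin[OF f]) (rule lam_word_ZW[OF op ZW_alt[OF f]])
  show ?thesis using ZW_add[OF 1 2] .
qed

lemma lam_FPcar: assumes op: "is_op (Xo l) a" and x: "x \<in> FPcar Xo" shows "lam Xo l a x \<in> FPcar Xo"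
proof -
  obtain b f where f: "f \<in> ZW Xo" and xe: "x = (b, cls Xo f)" using x FPcar_iff by blast
  have s: "snd (a (b, bm_zero (Xo l))) \<in> bm_car (Xo l)" using op_snd_mem[OF is_bimod_Xo op bm_zero_mem[OF is_bimod_Xo]] .
  show ?thesis unfolding xe lam_cls[OF op f] FPcar_iff using lam_reduced_ZW[OF op f s] by blast
qed

lemma Ppr_FPcar: assumes x: "x \<in> FPcar Xo" shows "Ppr Xo l x \<in> FPcar Xo"
proof -
  obtain b f where f: "f \<in> ZW Xo" and xe: "x = (b, cls Xo f)" using x FPcar_iff by blast
  show ?thesis unfolding xe Ppr_cls[OF f] FPcar_iff using single_part_ZW[OF f] by blast
qed

section \<open>Subsets preserved by the factors\<close>

text \<open>The range \<open>B \<oplus> X\<^sub>l\<close> of \<open>P\<^sub>l\<close>, and a set preserved by \<open>\<lambda>\<^sub>l(a)\<close> and annihilated by \<open>P\<^sub>l\<close>: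
  its words need length 3 to start with \<open>l\<close> because \<open>\<lambda>\<^sub>l(a)\<close> absorbs a leading \<open>l\<close>-letter.\<close>

definition summand_set :: "'i \<Rightarrow> ('b, 'i, 'x) fpel set" where
  "summand_set l = {(\<beta>, cls Xo g) | \<beta> g. g \<in> ZW Xo \<and> (\<forall>w. g w \<noteq> 0 \<longrightarrow> (\<exists>\<xi>. w = [(l, \<xi>)]))}"

definition far_set :: "'i \<Rightarrow> ('b, 'i, 'x) fpel set" where
  "far_set l = {(0, cls Xo g) | g. g \<in> ZW Xo \<and> (\<forall>w. g w \<noteq> 0 \<longrightarrow> 2 \<le> length w \<and> (fst (hd w) = l \<longrightarrow> 3 \<le> length w))}"

definition zero_set :: "('b, 'i, 'x) fpel set" where
  "zero_set = {(0, cls Xo (\<lambda>_. 0))}"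

lemma summand_set_FPcar: "x \<in> summand_set l \<Longrightarrow> x \<in> FPcar Xo"
  unfolding summand_set_def FPcar_iff by blast

lemma far_set_FPcar: "x \<in> far_set l \<Longrightarrow> x \<in> FPcar Xo"
  unfolding far_set_def FPcar_iff by blast

lemma zero_set_far_set: "x \<in> zero_set \<Longrightarrow> x \<in> far_set l"
  unfolding zero_set_def far_set_def using ZW_zero by auto

lemma zero_set_FPcar: "x \<in> zero_set \<Longrightarrow> x \<in> FPcar Xo"
  using zero_set_far_set far_set_FPcar by blast

lemma Ppr_summand_set: assumes x: "x \<in> FPcar Xo" shows "Ppr Xo l x \<in> summand_set l"
proof -
  obtain b f where f: "f \<in> ZW Xo" and xe: "x = (b, cls Xo f)" using x FPcar_iff by blast
  have "\<forall>w. single_part l f w \<noteq> 0 \<longrightarrow> (\<exists>\<xi>. w = [(l, \<xi>)])" unfolding single_part_def by auto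
  then show ?thesis unfolding xe Ppr_cls[OF f] summand_set_def using single_part_ZW[OF f] by blast
qed

lemma lam_summand_set: assumes op: "is_op (Xo l) a" and x: "x \<in> summand_set l" shows "lam Xo l a x \<in> summand_set l"
proof -
  obtain b g where g: "g \<in> ZW Xo" and gs: "\<forall>w. g w \<noteq> 0 \<longrightarrow> (\<exists>\<xi>. w = [(l, \<xi>)])" and xe: "x = (b, cls Xo g)"
    using x unfolding summand_set_def by blast
  let ?s = "snd (a (b, bm_zero (Xo l)))"
  have s: "?s \<in> bm_car (Xo l)" using op_snd_mem[OF is_bimod_Xo op bm_zero_mem[OF is_bimod_Xo]] .
  have "\<exists>\<xi>. u = [(l, \<xi>)]" if nz: "dlt [(l, ?s)] u + lin (\<lambda>w. snd (lam_word Xo l a w) u) g \<noteq> 0" for u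
  proof (cases "u = [(l, ?s)]")
    case True then show ?thesis by blast
  next
    case False
    then have "lin (\<lambda>w. snd (lam_word Xo l a w) u) g \<noteq> 0" using nz by (simp add: dlt_def)
    then obtain w where w: "g w \<noteq> 0" "snd (lam_word Xo l a w) u \<noteq> 0" using lin_nonzero_support[of "\<lambda>w. snd (lam_word Xo l a w)" u g] by blast
    obtain \<xi> where "w = [(l, \<xi>)]" using gs w(1) by blast
    then have "u = [(l, snd (a (0, \<xi>)))]" using w(2) by (simp add: lam_word_single dlt_def split: if_splits)
    then show ?thesis by blast
  qed
  then show ?thesis unfolding xe lam_cls[OF op g] summand_set_def using lam_reduced_ZW[OF op g s] by blast
qed

lemma lam_word_far_support:
  assumes aw: "alt_word Xo w" and lw: "2 \<le> length w" "fst (hd w) = l \<longrightarrow> 3 \<le> length w"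
    and u: "snd (lam_word Xo l a w) u \<noteq> 0"
  shows "2 \<le> length u \<and> (fst (hd u) = l \<longrightarrow> 3 \<le> length u)"
proof -
  obtain p r where pr: "w = p # r" using alt_word_nonempty[OF aw] by (cases w) auto
  then have rne: "r \<noteq> []" using lw by auto
  show ?thesis
  proof (cases "fst p = l")
    case False
    then have ne: "w \<noteq> []" "fst (hd w) \<noteq> l" using pr by auto
    let ?c = "fst (a (1, bm_zero (Xo l)))" and ?s = "snd (a (1, bm_zero (Xo l)))"
    have "u = lactw Xo ?c w \<or> u = (l, ?s) # w"
      using u lam_word_other[OF ne, of a] by (intro dlt_add_nonzero) simp
    then show ?thesis using lw ne length_lactw fst_hd_lactw[OF ne(1)] by auto
  next
    case True
    then have p: "p = (l, snd p)" by (cases p) auto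
    have "fst (hd r) \<noteq> l" using alt_word_tl[of p r] aw pr rne True by auto
    moreover have "2 \<le> length r" using lw pr True by simp
    moreover have "u = lactw Xo (fst (a (0, snd p))) r \<or> u = (l, snd (a (0, snd p))) # r"
      using u lam_word_Cons[OF rne, of l a "snd p"] pr p by (intro dlt_add_nonzero) (metis snd_conv)
    ultimately show ?thesis using length_lactw fst_hd_lactw[OF rne] by auto
  qed
qed

lemma lam_far_set: assumes op: "is_op (Xo l) a" and x: "x \<in> far_set l" shows "lam Xo l a x \<in> far_set l"
proof -
  obtain g where g: "g \<in> ZW Xo" and gs: "\<forall>w. g w \<noteq> 0 \<longrightarrow> 2 \<le> length w \<and> (fst (hd w) = l \<longrightarrow> 3 \<le> length w)"
    and xe: "x = (0, cls Xo g)" using x unfolding far_set_def by blast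
  have z0: "a (0, bm_zero (Xo l)) = (0, bm_zero (Xo l))" by (rule op_zero[OF is_bimod_Xo op])
  have f0: "lin (\<lambda>w. fst (lam_word Xo l a w)) g = 0"
  proof (rule lin_eq_zeroI)
    fix w assume w: "g w \<noteq> 0"
    show "fst (lam_word Xo l a w) = 0"
    proof (rule ccontr)
      assume "fst (lam_word Xo l a w) \<noteq> 0"
      then obtain \<xi> where "w = [(l, \<xi>)]" using lam_word_fst_nonzero alt_word_nonempty[OF ZW_alt[OF g w]] by blast
      then show False using gs w by auto
    qed
  qed
  define G where "G = (\<lambda>u. lin (\<lambda>w. snd (lam_word Xo l a w) u) g)"
  have GZ: "G \<in> ZW Xo" unfolding G_def by (rule ZW_lin[OF g]) (rule lam_word_ZW[OF op ZW_alt[OF g]])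
  have ce: "cls Xo (\<lambda>u. dlt [(l, bm_zero (Xo l))] u + G u) = cls Xo G"
    by (rule cls_eqI) (simp add: dlt_zero_single)
  have Gs: "2 \<le> length u \<and> (fst (hd u) = l \<longrightarrow> 3 \<le> length u)" if nz: "G u \<noteq> 0" for u
  proof -
    obtain w where w: "g w \<noteq> 0" "snd (lam_word Xo l a w) u \<noteq> 0"
      using lin_nonzero_support[of "\<lambda>w. snd (lam_word Xo l a w)" u g] nz unfolding G_def by blast
    then show ?thesis using lam_word_far_support ZW_alt[OF g] gs by blast
  qed
  show ?thesis unfolding xe lam_cls[OF op g] z0 far_set_def fst_conv snd_conv f0
    using ce GZ Gs unfolding G_def by auto
qed

lemma Ppr_far_set: assumes x: "x \<in> far_set l'" shows "Ppr Xo l x \<in> zero_set"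
proof -
  obtain g where g: "g \<in> ZW Xo" and gs: "\<forall>w. g w \<noteq> 0 \<longrightarrow> 2 \<le> length w \<and> (fst (hd w) = l' \<longrightarrow> 3 \<le> length w)"
    and xe: "x = (0, cls Xo g)" using x unfolding far_set_def by blast
  have g0: "g [(l, \<xi>)] = 0" for \<xi>
  proof (rule ccontr)
    assume "g [(l, \<xi>)] \<noteq> 0"
    then have "2 \<le> length [(l, \<xi>)]" using gs by blast
    then show False by simp
  qed
  have "single_part l g = (\<lambda>_. 0)" unfolding single_part_def using g0 by (auto intro!: ext)
  then show ?thesis unfolding xe Ppr_cls[OF g] zero_set_def by simp
qed

lemma lam_zero_set: assumes op: "is_op (Xo l) a" and x: "x \<in> zero_set" shows "lam Xo l a x \<in> zero_set"
proof -
  have xe: "x = (0, cls Xo (\<lambda>_. 0))" using x unfolding zero_set_def by blast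
  have z0: "a (0, bm_zero (Xo l)) = (0, bm_zero (Xo l))" by (rule op_zero[OF is_bimod_Xo op])
  have ce: "cls Xo (\<lambda>u. dlt [(l, bm_zero (Xo l))] u + lin (\<lambda>w. snd (lam_word Xo l a w) u) (\<lambda>_. 0)) = cls Xo (\<lambda>_. 0)"
    by (rule cls_eqI) (simp add: dlt_zero_single lin_zero)
  show ?thesis unfolding xe lam_cls[OF op ZW_zero] z0 zero_set_def fst_conv snd_conv ce by (simp add: lin_zero)
qed

lemma Ppr_zero_set: assumes x: "x \<in> zero_set" shows "Ppr Xo l x \<in> zero_set"
proof -
  have xe: "x = (0, cls Xo (\<lambda>_. 0))" using x unfolding zero_set_def by blast
  have "single_part l (\<lambda>_. 0) = (\<lambda>_. 0)" unfolding single_part_def by auto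
  then show ?thesis unfolding xe Ppr_cls[OF ZW_zero] zero_set_def by simp
qed

lemma AF_E: "T \<in> AF Xo l \<Longrightarrow> \<exists>a. is_op (Xo l) a \<and> T = lam Xo l a"
  unfolding AF_def by blast

lemma AB_E: "T \<in> AB Xo l \<Longrightarrow> \<exists>a. is_op (Xo l) a \<and> T = restr Xo (Ppr Xo l \<circ> lam Xo l a \<circ> Ppr Xo l)"
  unfolding AB_def by blast

lemma AB_apply: assumes T: "T \<in> AB Xo l" and x: "x \<in> FPcar Xo"
  shows "\<exists>a. is_op (Xo l) a \<and> T x = Ppr Xo l (lam Xo l a (Ppr Xo l x))"
  using AB_E[OF T] x unfolding restr_def by auto

lemma factor_FPcar: assumes T: "T \<in> AF Xo l \<union> AB Xo l" and x: "x \<in> FPcar Xo" shows "T x \<in> FPcar Xo"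
proof (cases "T \<in> AF Xo l")
  case True then show ?thesis using AF_E lam_FPcar x by blast
next
  case False
  then have "T \<in> AB Xo l" using T by blast
  then obtain a where a: "is_op (Xo l) a" "T x = Ppr Xo l (lam Xo l a (Ppr Xo l x))" using AB_apply x by blast
  show ?thesis unfolding a(2) by (rule Ppr_FPcar[OF lam_FPcar[OF a(1) Ppr_FPcar[OF x]]])
qed

lemma AB_summand_set: assumes T: "T \<in> AB Xo l" and x: "x \<in> FPcar Xo" shows "T x \<in> summand_set l"
proof -
  obtain a where a: "is_op (Xo l) a" "T x = Ppr Xo l (lam Xo l a (Ppr Xo l x))" using AB_apply[OF T x] by blast
  show ?thesis unfolding a(2) by (rule Ppr_summand_set[OF lam_FPcar[OF a(1) Ppr_FPcar[OF x]]])
qed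

lemma factor_summand_set: assumes T: "T \<in> AF Xo l \<union> AB Xo l" and x: "x \<in> summand_set l" shows "T x \<in> summand_set l"
proof (cases "T \<in> AF Xo l")
  case True then show ?thesis using AF_E lam_summand_set x by blast
next
  case False
  then have "T \<in> AB Xo l" using T by blast
  then show ?thesis using AB_summand_set summand_set_FPcar[OF x] by blast
qed

lemma AB_far_set_zero: assumes T: "T \<in> AB Xo l" and x: "x \<in> far_set l" shows "T x \<in> zero_set"
proof -
  obtain a where a: "is_op (Xo l) a" "T x = Ppr Xo l (lam Xo l a (Ppr Xo l x))" using AB_apply[OF T far_set_FPcar[OF x]] by blast
  show ?thesis unfolding a(2) by (rule Ppr_zero_set[OF lam_zero_set[OF a(1) Ppr_far_set[OF x]]])
qed

lemma factor_far_set: assumes T: "T \<in> AF Xo l \<union> AB Xo l" and x: "x \<in> far_set l" shows "T x \<in> far_set l"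
proof (cases "T \<in> AF Xo l")
  case True then show ?thesis using AF_E lam_far_set x by blast
next
  case False
  then have "T \<in> AB Xo l" using T by blast
  then show ?thesis using AB_far_set_zero x zero_set_far_set by blast
qed

lemma factor_zero_set: assumes T: "T \<in> AF Xo l \<union> AB Xo l" and x: "x \<in> zero_set" shows "T x \<in> zero_set"
proof (cases "T \<in> AF Xo l")
  case True then show ?thesis using AF_E lam_zero_set x by blast
next
  case False
  then have T': "T \<in> AB Xo l" using T by blast
  obtain a where a: "is_op (Xo l) a" "T x = Ppr Xo l (lam Xo l a (Ppr Xo l x))" using AB_apply[OF T' zero_set_FPcar[OF x]] by blast
  show ?thesis unfolding a(2) by (rule Ppr_zero_set[OF lam_zero_set[OF a(1) Ppr_zero_set[OF x]]])
qed

section \<open>Free factors act on the first tensor leg\<close>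

text \<open>\<open>tensor_rep l x y F\<close> represents the reduced part of \<open>V\<^sub>l\<^sup>-\<^sup>1(x \<otimes> 1 + y \<otimes> F)\<close>, whose \<open>B\<close>-part
  is \<open>fst x\<close>; \<open>away_from l F\<close> says that \<open>F\<close> represents a vector of the reduced part of \<open>X(l)\<close>.\<close>

definition tensor_rep :: "'i \<Rightarrow> 'b \<times> 'x \<Rightarrow> 'b \<times> 'x \<Rightarrow> (('i \<times> 'x) list \<Rightarrow> int) \<Rightarrow> (('i \<times> 'x) list \<Rightarrow> int)" where
  "tensor_rep l x y F = (\<lambda>u. dlt [(l, snd x)] u + lin (\<lambda>t. dlt (lactw Xo (fst y) t) u + dlt ((l, snd y) # t) u) F)"

definition away_from :: "'i \<Rightarrow> (('i \<times> 'x) list \<Rightarrow> int) \<Rightarrow> bool" where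
  "away_from l F \<longleftrightarrow> F \<in> ZW Xo \<and> (\<forall>t. F t \<noteq> 0 \<longrightarrow> fst (hd t) \<noteq> l)"

lemma tensor_rep_ZW: assumes x: "snd x \<in> bm_car (Xo l)" and y: "snd y \<in> bm_car (Xo l)" and F: "away_from l F"
  shows "tensor_rep l x y F \<in> ZW Xo"
proof -
  have F1: "F \<in> ZW Xo" and F2: "\<And>t. F t \<noteq> 0 \<Longrightarrow> fst (hd t) \<noteq> l" using F unfolding away_from_def by auto
  have 1: "dlt [(l, snd x)] \<in> ZW Xo" by (rule ZW_dlt) (simp add: alt_word_single x)
  have 2: "(\<lambda>u. lin (\<lambda>t. dlt (lactw Xo (fst y) t) u + dlt ((l, snd y) # t) u) F) \<in> ZW Xo"
  proof (rule ZW_lin[OF F1])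
    fix t assume t: "F t \<noteq> 0"
    have at: "alt_word Xo t" using ZW_alt[OF F1 t] .
    have a2: "alt_word Xo ((l, snd y) # t)" using alt_word_Cons_other[OF at F2[OF t] y] .
    show "(\<lambda>u. dlt (lactw Xo (fst y) t) u + dlt ((l, snd y) # t) u) \<in> ZW Xo"
      using ZW_add[OF ZW_dlt[OF alt_word_lactw[OF at]] ZW_dlt[OF a2]] .
  qed
  show ?thesis unfolding tensor_rep_def using ZW_add[OF 1 2] .
qed

lemma lam_word_lactw_other: "t \<noteq> [] \<Longrightarrow> fst (hd t) \<noteq> l \<Longrightarrow> lam_word Xo l a (lactw Xo \<gamma> t) =
   (0, \<lambda>u. dlt (lactw Xo (fst (a (1, bm_zero (Xo l)))) (lactw Xo \<gamma> t)) u
     + dlt ((l, snd (a (1, bm_zero (Xo l)))) # lactw Xo \<gamma> t) u)"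
  by (rule lam_word_other) (cases t; simp)+

lemma lin_fst_lam_word_tensor_rep: assumes F: "away_from l F"
  shows "lin (\<lambda>w. fst (lam_word Xo l a w)) (tensor_rep l (b, \<xi>) (\<gamma>, \<sigma>) F) = fst (a (0, \<xi>))"
proof -
  have Ffin: "finite {t. F t \<noteq> 0}" and Fhd: "\<And>t. F t \<noteq> 0 \<Longrightarrow> t \<noteq> [] \<and> fst (hd t) \<noteq> l"
    using F ZW_fin ZW_alt alt_word_nonempty unfolding away_from_def by blast+
  have "lin (\<lambda>w. fst (lam_word Xo l a w)) (tensor_rep l (b, \<xi>) (\<gamma>, \<sigma>) F) = fst (lam_word Xo l a [(l, \<xi>)])
     + lin (\<lambda>t. fst (lam_word Xo l a (lactw Xo \<gamma> t)) + fst (lam_word Xo l a ((l, \<sigma>) # t))) F"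
    unfolding tensor_rep_def fst_conv snd_conv by (rule lin_dlt_add_lin[OF Ffin])
  also have "lin (\<lambda>t. fst (lam_word Xo l a (lactw Xo \<gamma> t)) + fst (lam_word Xo l a ((l, \<sigma>) # t))) F = 0"
    by (rule lin_eq_zeroI) (simp add: Fhd lam_word_lactw_other lam_word_Cons)
  finally show ?thesis by (simp add: lam_word_single)
qed

lemma lin_snd_lam_word_tensor_rep: assumes F: "away_from l F"
  shows "lin (\<lambda>w. snd (lam_word Xo l a w) u) (tensor_rep l (b, \<xi>) (\<gamma>, \<sigma>) F)
    = dlt [(l, snd (a (0, \<xi>)))] u
      + lin (\<lambda>t. (dlt (lactw Xo (fst (a (1, bm_zero (Xo l)))) (lactw Xo \<gamma> t)) u
          + dlt ((l, snd (a (1, bm_zero (Xo l)))) # lactw Xo \<gamma> t) u)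
        + (dlt (lactw Xo (fst (a (0, \<sigma>))) t) u + dlt ((l, snd (a (0, \<sigma>))) # t) u)) F"
proof -
  have Ffin: "finite {t. F t \<noteq> 0}" and Fhd: "\<And>t. F t \<noteq> 0 \<Longrightarrow> t \<noteq> [] \<and> fst (hd t) \<noteq> l"
    using F ZW_fin ZW_alt alt_word_nonempty unfolding away_from_def by blast+
  have "lin (\<lambda>w. snd (lam_word Xo l a w) u) (tensor_rep l (b, \<xi>) (\<gamma>, \<sigma>) F) = snd (lam_word Xo l a [(l, \<xi>)]) u
     + lin (\<lambda>t. snd (lam_word Xo l a (lactw Xo \<gamma> t)) u + snd (lam_word Xo l a ((l, \<sigma>) # t)) u) F"
    unfolding tensor_rep_def fst_conv snd_conv by (rule lin_dlt_add_lin[OF Ffin])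
  also have "lin (\<lambda>t. snd (lam_word Xo l a (lactw Xo \<gamma> t)) u + snd (lam_word Xo l a ((l, \<sigma>) # t)) u) F
      = lin (\<lambda>t. (dlt (lactw Xo (fst (a (1, bm_zero (Xo l)))) (lactw Xo \<gamma> t)) u
          + dlt ((l, snd (a (1, bm_zero (Xo l)))) # lactw Xo \<gamma> t) u)
        + (dlt (lactw Xo (fst (a (0, \<sigma>))) t) u + dlt ((l, snd (a (0, \<sigma>))) # t) u)) F"
    by (rule lin_cong) (simp add: Fhd lam_word_lactw_other lam_word_Cons)
  finally show ?thesis by (simp add: lam_word_single)
qed

lemma rel_sub_tensor_term:
  assumes op: "is_op (Xo l) a" and t: "alt_word Xo t" "fst (hd t) \<noteq> l" and \<sigma>: "\<sigma> \<in> bm_car (Xo l)"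
  defines "c1 \<equiv> fst (a (1, bm_zero (Xo l)))" and "s1 \<equiv> snd (a (1, bm_zero (Xo l)))"
    and "c2 \<equiv> fst (a (0, \<sigma>))" and "s2 \<equiv> snd (a (0, \<sigma>))"
  shows "(\<lambda>u. ((dlt (lactw Xo c1 (lactw Xo \<gamma> t)) u + dlt ((l, s1) # lactw Xo \<gamma> t) u)
              + (dlt (lactw Xo c2 t) u + dlt ((l, s2) # t) u))
          - (dlt (lactw Xo (\<gamma> * c1 + c2) t) u + dlt ((l, bm_add (Xo l) (bm_lact (Xo l) \<gamma> s1) s2) # t) u))
      \<in> rel_sub Xo"
proof -
  have s1: "s1 \<in> bm_car (Xo l)" and s2: "s2 \<in> bm_car (Xo l)"
    unfolding s1_def s2_def using op_snd_mem[OF is_bimod_Xo op] bm_zero_mem[OF is_bimod_Xo] \<sigma> by auto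
  have c1: "\<gamma> * c1 = c1 * \<gamma>" and s1\<gamma>: "bm_ract (Xo l) s1 \<gamma> = bm_lact (Xo l) \<gamma> s1"
    unfolding c1_def s1_def using op_unit_fst_commute[OF is_bimod_Xo op] op_unit_snd_commute[OF is_bimod_Xo op]
    by simp_all
  obtain i0 x0 t' where te: "t = (i0, x0) # t'" using alt_word_nonempty[OF t(1)] by (cases t) auto
  have x0: "x0 \<in> bm_car (Xo i0)" using t(1) te alt_word_hd by fastforce
  have e1: "lactw Xo c1 (lactw Xo \<gamma> t) = (i0, bm_lact (Xo i0) (\<gamma> * c1) x0) # t'"
    unfolding te using bm_lact_mult[OF is_bimod_Xo x0, of c1 \<gamma>] c1 by simp
  have e3: "lactw Xo (\<gamma> * c1 + c2) t = (i0, bm_add (Xo i0) (bm_lact (Xo i0) (\<gamma> * c1) x0) (bm_lact (Xo i0) c2 x0)) # t'"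
    unfolding te using bm_lact_scalar_add[OF is_bimod_Xo x0] by simp
  have a1: "alt_word Xo ((i0, bm_lact (Xo i0) (\<gamma> * c1) x0) # t')"
    using t(1) te x0 bm_lact_mem[OF is_bimod_Xo] by (simp add: alt_word_Cons)
  have a2: "alt_word Xo ((l, bm_lact (Xo l) \<gamma> s1) # t)"
    using alt_word_Cons_other[OF t] bm_lact_mem[OF is_bimod_Xo s1] by blast
  have a3: "alt_word Xo ((l, s1) # t)" using alt_word_Cons_other[OF t s1] .
  have R1: "(\<lambda>u. dlt (lactw Xo (\<gamma> * c1 + c2) t) u - dlt (lactw Xo c1 (lactw Xo \<gamma> t)) u - dlt (lactw Xo c2 t) u) \<in> rel_sub Xo"
    using rel_sub_additivity[OF a1, where j = 0 and \<xi> = "bm_lact (Xo i0) (\<gamma> * c1) x0" and \<eta> = "bm_lact (Xo i0) c2 x0"]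
      x0 bm_lact_mem[OF is_bimod_Xo x0] unfolding e1 e3 by (simp add: te)
  have R2: "(\<lambda>u. dlt ((l, bm_add (Xo l) (bm_lact (Xo l) \<gamma> s1) s2) # t) u - dlt ((l, bm_lact (Xo l) \<gamma> s1) # t) u
      - dlt ((l, s2) # t) u) \<in> rel_sub Xo"
    using rel_sub_additivity[OF a2, where j = 0 and \<xi> = "bm_lact (Xo l) \<gamma> s1" and \<eta> = s2]
      bm_lact_mem[OF is_bimod_Xo s1] s2 by simp
  have R3: "(\<lambda>u. dlt ((l, bm_lact (Xo l) \<gamma> s1) # t) u - dlt ((l, s1) # lactw Xo \<gamma> t) u) \<in> rel_sub Xo"
    using rel_sub_balancing[OF a3, where j = 0 and b = \<gamma>] s1\<gamma> by (simp add: te)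
  have "(\<lambda>u. - (dlt (lactw Xo (\<gamma> * c1 + c2) t) u - dlt (lactw Xo c1 (lactw Xo \<gamma> t)) u - dlt (lactw Xo c2 t) u)
     + (- (dlt ((l, bm_add (Xo l) (bm_lact (Xo l) \<gamma> s1) s2) # t) u - dlt ((l, bm_lact (Xo l) \<gamma> s1) # t) u
      - dlt ((l, s2) # t) u) + - (dlt ((l, bm_lact (Xo l) \<gamma> s1) # t) u - dlt ((l, s1) # lactw Xo \<gamma> t) u))) \<in> rel_sub Xo"
    by (rule rel_sub_add[OF rel_sub_uminus[OF R1] rel_sub_add[OF rel_sub_uminus[OF R2] rel_sub_uminus[OF R3]]])
  then show ?thesis by (rule rel_sub_cong) (simp add: algebra_simps)
qed

lemma lam_tensor_rep: assumes op: "is_op (Xo l) a" and x: "x \<in> Xcar (Xo l)" and y: "y \<in> Xcar (Xo l)" and F: "away_from l F"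
  shows "lam Xo l a (fst x, cls Xo (tensor_rep l x y F)) = (fst (a x), cls Xo (tensor_rep l (a x) (a y) F))"
proof -
  obtain b \<xi> where xe: "x = (b, \<xi>)" by (cases x)
  obtain \<gamma> \<sigma> where ye: "y = (\<gamma>, \<sigma>)" by (cases y)
  have \<xi>: "\<xi> \<in> bm_car (Xo l)" and \<sigma>: "\<sigma> \<in> bm_car (Xo l)" using x y unfolding xe ye by (simp_all add: Xcar_iff)
  have Ffin: "finite {t. F t \<noteq> 0}" using F ZW_fin unfolding away_from_def by blast
  let ?z = "bm_zero (Xo l)"
  let ?c1 = "fst (a (1, ?z))" and ?s1 = "snd (a (1, ?z))"
  let ?sb = "snd (a (b, ?z))" and ?s0 = "snd (a (0, \<xi>))" and ?c2 = "fst (a (0, \<sigma>))" and ?s2 = "snd (a (0, \<sigma>))"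
  have sb: "?sb \<in> bm_car (Xo l)" using op_snd_mem[OF is_bimod_Xo op bm_zero_mem[OF is_bimod_Xo]] .
  have s0: "?s0 \<in> bm_car (Xo l)" using op_snd_mem[OF is_bimod_Xo op \<xi>] .
  have ax: "a x = (fst (a (b, ?z)) + fst (a (0, \<xi>)), bm_add (Xo l) ?sb ?s0)"
    unfolding xe by (rule op_split[OF is_bimod_Xo op \<xi>])
  have ay: "a y = (\<gamma> * ?c1 + ?c2, bm_add (Xo l) (bm_lact (Xo l) \<gamma> ?s1) ?s2)"
    unfolding ye using op_split[OF is_bimod_Xo op \<sigma>, of \<gamma>] op_scalar_lact[OF is_bimod_Xo op, of \<gamma>] by simp
  have VZ: "tensor_rep l x y F \<in> ZW Xo" using tensor_rep_ZW[OF _ _ F] \<xi> \<sigma> xe ye by simp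
  have D0: "(\<lambda>u. (dlt [(l, ?sb)] u + dlt [(l, ?s0)] u) - dlt [(l, bm_add (Xo l) ?sb ?s0)] u) \<in> rel_sub Xo"
  proof -
    have "alt_word Xo [(l, ?sb)]" by (simp add: alt_word_single sb)
    from rel_sub_additivity[OF this, where j = 0 and \<xi> = ?sb and \<eta> = ?s0]
    have "(\<lambda>u. dlt [(l, bm_add (Xo l) ?sb ?s0)] u - dlt [(l, ?sb)] u - dlt [(l, ?s0)] u) \<in> rel_sub Xo"
      using sb s0 by simp
    from rel_sub_uminus[OF this] show ?thesis by (rule rel_sub_cong) (simp add: algebra_simps)
  qed
  have DT: "(\<lambda>u. lin (\<lambda>t. ((dlt (lactw Xo ?c1 (lactw Xo \<gamma> t)) u + dlt ((l, ?s1) # lactw Xo \<gamma> t) u)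
              + (dlt (lactw Xo ?c2 t) u + dlt ((l, ?s2) # t) u))
          - (dlt (lactw Xo (\<gamma> * ?c1 + ?c2) t) u + dlt ((l, bm_add (Xo l) (bm_lact (Xo l) \<gamma> ?s1) ?s2) # t) u)) F)
      \<in> rel_sub Xo"
    by (rule rel_sub_lin[OF Ffin rel_sub_tensor_term[OF op _ _ \<sigma>]]) (use F in \<open>auto simp: away_from_def dest: ZW_alt\<close>)
  have VA: "tensor_rep l (a x) (a y) F = (\<lambda>u. dlt [(l, bm_add (Xo l) ?sb ?s0)] u
     + lin (\<lambda>t. dlt (lactw Xo (\<gamma> * ?c1 + ?c2) t) u + dlt ((l, bm_add (Xo l) (bm_lact (Xo l) \<gamma> ?s1) ?s2) # t) u) F)"
    unfolding tensor_rep_def ax ay by simp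
  have "cls Xo (\<lambda>u. dlt [(l, ?sb)] u + lin (\<lambda>w. snd (lam_word Xo l a w) u) (tensor_rep l x y F))
      = cls Xo (tensor_rep l (a x) (a y) F)"
  proof (rule cls_eqI)
    show "(\<lambda>u. (dlt [(l, ?sb)] u + lin (\<lambda>w. snd (lam_word Xo l a w) u) (tensor_rep l x y F))
        - tensor_rep l (a x) (a y) F u) \<in> rel_sub Xo"
      using rel_sub_add[OF D0 DT] unfolding xe ye lin_snd_lam_word_tensor_rep[OF F] VA[unfolded xe ye] lin_fun_diff
      by (simp add: algebra_simps)
  qed
  then show ?thesis using lin_fst_lam_word_tensor_rep[OF F, of a b \<xi> \<gamma> \<sigma>]
    unfolding xe lam_cls[OF op VZ[unfolded xe]] ax[unfolded xe] by (simp add: ye)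
qed

lemma oprod_AF_tensor_rep: assumes "\<forall>T\<in>set Ts. T \<in> AF Xo l"
  shows "\<exists>c. is_op (Xo l) c \<and> (\<forall>x y F. x \<in> Xcar (Xo l) \<longrightarrow> y \<in> Xcar (Xo l) \<longrightarrow> away_from l F \<longrightarrow>
     oprod Ts (fst x, cls Xo (tensor_rep l x y F)) = (fst (c x), cls Xo (tensor_rep l (c x) (c y) F)))"
  using assms
proof (induction Ts)
  case Nil
  show ?case by (rule exI[of _ id]) (simp add: oprod_Nil is_op_id[unfolded id_def])
next
  case (Cons T Ts)
  obtain c where c: "is_op (Xo l) c" and cV: "\<forall>x y F. x \<in> Xcar (Xo l) \<longrightarrow> y \<in> Xcar (Xo l) \<longrightarrow> away_from l F \<longrightarrow>
     oprod Ts (fst x, cls Xo (tensor_rep l x y F)) = (fst (c x), cls Xo (tensor_rep l (c x) (c y) F))" using Cons by auto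
  obtain a where a: "is_op (Xo l) a" "T = lam Xo l a" using AF_E Cons.prems by auto
  have cc: "\<And>x. x \<in> Xcar (Xo l) \<Longrightarrow> c x \<in> Xcar (Xo l)" using op_Xcar[OF is_bimod_Xo c] .
  show ?case
  proof (rule exI[of _ "a \<circ> c"], intro conjI allI impI)
    show "is_op (Xo l) (a \<circ> c)" by (rule is_op_comp[OF a(1) c])
    fix x y F assume xy: "x \<in> Xcar (Xo l)" "y \<in> Xcar (Xo l)" "away_from l F"
    have "oprod (T # Ts) (fst x, cls Xo (tensor_rep l x y F)) = lam Xo l a (fst (c x), cls Xo (tensor_rep l (c x) (c y) F))"
      using cV[rule_format, OF xy] a(2) by (simp add: oprod_Cons)
    also have "\<dots> = (fst (a (c x)), cls Xo (tensor_rep l (a (c x)) (a (c y)) F))"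
      by (rule lam_tensor_rep[OF a(1) cc[OF xy(1)] cc[OF xy(2)] xy(3)])
    finally show "oprod (T # Ts) (fst x, cls Xo (tensor_rep l x y F)) = (fst ((a \<circ> c) x), cls Xo (tensor_rep l ((a \<circ> c) x) ((a \<circ> c) y) F))"
      by simp
  qed
qed

lemma dlt_lactw_zero: assumes t: "alt_word Xo t" shows "dlt (lactw Xo 0 t) \<in> rel_sub Xo"
proof -
  obtain i0 x0 t' where te: "t = (i0, x0) # t'" using alt_word_nonempty[OF t] by (cases t) auto
  have x0: "x0 \<in> bm_car (Xo i0)" using t te alt_word_hd by fastforce
  have "lactw Xo 0 t = (i0, bm_zero (Xo i0)) # t'" unfolding te using bm_lact_scalar_zero[OF is_bimod_Xo x0] by simp
  moreover have "alt_word Xo ((i0, bm_zero (Xo i0)) # t')" using t te bm_zero_mem[OF is_bimod_Xo] by (simp add: alt_word_Cons)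
  ultimately show ?thesis using dlt_zero_letter by simp
qed

lemma lactw_one: assumes t: "alt_word Xo t" shows "lactw Xo 1 t = t"
proof -
  obtain i0 x0 t' where te: "t = (i0, x0) # t'" using alt_word_nonempty[OF t] by (cases t) auto
  have x0: "x0 \<in> bm_car (Xo i0)" using t te alt_word_hd by fastforce
  show ?thesis unfolding te using bm_lact_one[OF is_bimod_Xo x0] by simp
qed

lemma cls_eq_tensor_rep_unit: assumes f: "away_from l f"
  shows "cls Xo f = cls Xo (tensor_rep l (\<beta>, bm_zero (Xo l)) (1, bm_zero (Xo l)) f)"
proof (rule cls_eqI)
  let ?z = "bm_zero (Xo l)"
  have z: "?z \<in> bm_car (Xo l)" by (rule bm_zero_mem[OF is_bimod_Xo])
  have ffin: "finite {t. f t \<noteq> 0}" and tp: "\<And>t. f t \<noteq> 0 \<Longrightarrow> alt_word Xo t \<and> fst (hd t) \<noteq> l"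
    using f ZW_fin ZW_alt unfolding away_from_def by blast+
  have Z: "(\<lambda>u. lin (\<lambda>t. dlt ((l, ?z) # t) u) f) \<in> rel_sub Xo"
  proof (rule rel_sub_lin[OF ffin])
    fix t assume "f t \<noteq> 0"
    then have "alt_word Xo ((l, ?z) # t)" using tp alt_word_Cons_other z by blast
    then show "dlt ((l, ?z) # t) \<in> rel_sub Xo" by (rule dlt_zero_letter)
  qed
  have l1: "lin (\<lambda>t. dlt (lactw Xo 1 t) u + dlt ((l, ?z) # t) u) f = f u + lin (\<lambda>t. dlt ((l, ?z) # t) u) f" for u
  proof -
    have "lin (\<lambda>t. dlt (lactw Xo 1 t) u + dlt ((l, ?z) # t) u) f = lin (\<lambda>t. dlt t u + dlt ((l, ?z) # t) u) f"
      by (rule lin_cong) (simp add: lactw_one tp)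
    then show ?thesis by (simp add: lin_fun_add lin_dlt_self[OF ffin])
  qed
  have "(\<lambda>u. - (dlt [(l, ?z)] u + lin (\<lambda>t. dlt ((l, ?z) # t) u) f)) \<in> rel_sub Xo"
    by (rule rel_sub_uminus[OF rel_sub_add[OF dlt_zero_single Z]])
  then show "(\<lambda>u. f u - tensor_rep l (\<beta>, ?z) (1, ?z) f u) \<in> rel_sub Xo"
    by (rule rel_sub_cong) (simp add: tensor_rep_def l1)
qed

text \<open>A representative of \<open>\<eta> \<otimes> (\<beta> \<oplus> f)\<close>; the single letter is dropped when \<open>\<beta> = 0\<close>, where it
  would represent zero.\<close>

definition prefix_rep :: "'i \<Rightarrow> 'b \<Rightarrow> 'x \<Rightarrow> (('i \<times> 'x) list \<Rightarrow> int) \<Rightarrow> (('i \<times> 'x) list \<Rightarrow> int)" where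
  "prefix_rep l \<beta> \<eta> f =
     (\<lambda>u. (if \<beta> = 0 then 0 else dlt [(l, bm_lact (Xo l) \<beta> \<eta>)] u) + lin (\<lambda>t. dlt ((l, \<eta>) # t) u) f)"

lemma cls_tensor_rep_prefix_rep: assumes \<eta>: "\<eta> \<in> bm_car (Xo l)" and f: "away_from l f"
  shows "cls Xo (tensor_rep l (0, bm_lact (Xo l) \<beta> \<eta>) (0, \<eta>) f) = cls Xo (prefix_rep l \<beta> \<eta> f)"
proof (rule cls_eqI)
  have ffin: "finite {t. f t \<noteq> 0}" and tp: "\<And>t. f t \<noteq> 0 \<Longrightarrow> alt_word Xo t"
    using f ZW_fin ZW_alt unfolding away_from_def by blast+
  have Z: "(\<lambda>u. lin (\<lambda>t. dlt (lactw Xo 0 t) u) f) \<in> rel_sub Xo"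
    by (rule rel_sub_lin[OF ffin]) (simp add: dlt_lactw_zero tp)
  have D: "(\<lambda>u. dlt [(l, bm_lact (Xo l) \<beta> \<eta>)] u - (if \<beta> = 0 then 0 else dlt [(l, bm_lact (Xo l) \<beta> \<eta>)] u))
      \<in> rel_sub Xo"
    using dlt_zero_single bm_lact_scalar_zero[OF is_bimod_Xo \<eta>] rel_sub.zero by (cases "\<beta> = 0") simp_all
  show "(\<lambda>u. tensor_rep l (0, bm_lact (Xo l) \<beta> \<eta>) (0, \<eta>) f u - prefix_rep l \<beta> \<eta> f u) \<in> rel_sub Xo"
    by (rule rel_sub_cong[OF rel_sub_add[OF D Z]]) (simp add: tensor_rep_def prefix_rep_def lin_fun_add)
qed

lemma prefix_rep_ZW: assumes \<eta>: "\<eta> \<in> bm_car (Xo l)" and f: "away_from l f"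
  shows "prefix_rep l \<beta> \<eta> f \<in> ZW Xo"
proof -
  have "(\<lambda>u. if \<beta> = 0 then 0 else dlt [(l, bm_lact (Xo l) \<beta> \<eta>)] u) \<in> ZW Xo"
    using ZW_zero ZW_dlt[where Xo = Xo and w = "[(l, bm_lact (Xo l) \<beta> \<eta>)]"] bm_lact_mem[OF is_bimod_Xo \<eta>]
    by (cases "\<beta> = 0") (simp_all add: alt_word_single)
  moreover have "(\<lambda>u. lin (\<lambda>t. dlt ((l, \<eta>) # t) u) f) \<in> ZW Xo"
  proof (rule ZW_lin)
    show "f \<in> ZW Xo" using f unfolding away_from_def by blast
    fix t assume "f t \<noteq> 0"
    then have "alt_word Xo ((l, \<eta>) # t)" using f ZW_alt alt_word_Cons_other \<eta> unfolding away_from_def by blast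
    then show "dlt ((l, \<eta>) # t) \<in> ZW Xo" by (rule ZW_dlt)
  qed
  ultimately show ?thesis unfolding prefix_rep_def by (rule ZW_add)
qed

lemma prefix_rep_support: assumes f: "away_from l f" and nz: "prefix_rep l \<beta> \<eta> f w \<noteq> 0"
  shows "fst (hd w) = l \<and> (\<beta> = 0 \<longrightarrow> 2 \<le> length w)"
proof (cases "lin (\<lambda>t. dlt ((l, \<eta>) # t) w) f = 0")
  case True
  then have "\<beta> \<noteq> 0" "w = [(l, bm_lact (Xo l) \<beta> \<eta>)]"
    using nz unfolding prefix_rep_def by (auto simp: dlt_def split: if_splits)
  then show ?thesis by simp
next
  case False
  then obtain t where t: "f t \<noteq> 0" "dlt ((l, \<eta>) # t) w \<noteq> 0"
    using lin_nonzero_support[of "\<lambda>t. dlt ((l, \<eta>) # t)" w f] by blast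
  then have w: "w = (l, \<eta>) # t" by (simp add: dlt_def split: if_splits)
  have "t \<noteq> []" using t(1) f ZW_alt alt_word_nonempty unfolding away_from_def by blast
  then show ?thesis using w by (cases t) auto
qed

text \<open>With \<open>c(1) = 0 \<oplus> \<eta>\<close>, the vector \<open>\<beta> \<oplus> f = (\<beta> \<oplus> 0) \<otimes> 1 + 1 \<otimes> f\<close> is sent to
  \<open>c(\<beta>) \<otimes> 1 + c(1) \<otimes> f = \<eta> \<otimes> (\<beta> \<oplus> f)\<close>.\<close>

lemma oprod_AF_centered: assumes Ts: "\<forall>T\<in>set Ts. T \<in> AF Xo l" and E: "Exp Xo (oprod Ts) = 0"
    and f: "away_from l f"
  shows "\<exists>g. oprod Ts (\<beta>, cls Xo f) = (0, cls Xo g) \<and> g \<in> ZW Xo \<and>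
    (\<forall>w. g w \<noteq> 0 \<longrightarrow> fst (hd w) = l \<and> (\<beta> = 0 \<longrightarrow> 2 \<le> length w))"
proof -
  obtain c where c: "is_op (Xo l) c" and cV: "\<And>x y F. x \<in> Xcar (Xo l) \<Longrightarrow> y \<in> Xcar (Xo l) \<Longrightarrow> away_from l F \<Longrightarrow>
     oprod Ts (fst x, cls Xo (tensor_rep l x y F)) = (fst (c x), cls Xo (tensor_rep l (c x) (c y) F))"
    using oprod_AF_tensor_rep[OF Ts] by blast
  let ?z = "bm_zero (Xo l)"
  have z: "?z \<in> bm_car (Xo l)" by (rule bm_zero_mem[OF is_bimod_Xo])
  have X1: "(1, ?z) \<in> Xcar (Xo l)" and Xb: "(\<beta>, ?z) \<in> Xcar (Xo l)" using z by (simp_all add: Xcar_iff)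
  have "away_from l (\<lambda>_. 0)" unfolding away_from_def using ZW_zero by simp
  from cV[OF X1 X1 this] have "fst (c (1, ?z)) = 0"
    using E cls_eq_tensor_rep_unit[OF \<open>away_from l (\<lambda>_. 0)\<close>, of 1] unfolding Exp_def by simp
  define \<eta> where "\<eta> = snd (c (1, ?z))"
  have \<eta>: "\<eta> \<in> bm_car (Xo l)" unfolding \<eta>_def using op_snd_mem[OF is_bimod_Xo c z] .
  have c1: "c (1, ?z) = (0, \<eta>)" using \<open>fst (c (1, ?z)) = 0\<close> \<eta>_def by (metis prod.collapse)
  have cb: "c (\<beta>, ?z) = (0, bm_lact (Xo l) \<beta> \<eta>)"
    using op_scalar_lact[OF is_bimod_Xo c, of \<beta>] \<open>fst (c (1, ?z)) = 0\<close> \<eta>_def by simp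
  have "oprod Ts (\<beta>, cls Xo f) = (0, cls Xo (prefix_rep l \<beta> \<eta> f))"
    using cV[OF Xb X1 f] cls_eq_tensor_rep_unit[OF f, of \<beta>] cls_tensor_rep_prefix_rep[OF \<eta> f, of \<beta>]
    unfolding c1 cb by simp
  then show ?thesis using prefix_rep_ZW[OF \<eta> f] prefix_rep_support[OF f] by blast
qed

lemma oprod_boolean_into_summand_set:
  assumes factors: "set Ts \<subseteq> AF Xo l \<union> AB Xo l" and boolean: "\<exists>T\<in>set Ts. T \<in> AB Xo l"
    and x: "x \<in> FPcar Xo"
  shows "oprod Ts x \<in> summand_set l"
proof (rule oprod_into[where P = "FPcar Xo", OF _ _ _ x])
  show "\<forall>T\<in>set Ts. \<forall>x\<in>FPcar Xo. T x \<in> FPcar Xo" using factor_FPcar factors by blast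
  show "\<forall>T\<in>set Ts. \<forall>x\<in>summand_set l. T x \<in> summand_set l" using factor_summand_set factors by blast
  show "\<exists>T\<in>set Ts. \<forall>x\<in>FPcar Xo. T x \<in> summand_set l" using AB_summand_set boolean by blast
qed

lemma oprod_boolean_far_set_zero:
  assumes factors: "set Ts \<subseteq> AF Xo l \<union> AB Xo l" and boolean: "\<exists>T\<in>set Ts. T \<in> AB Xo l"
    and x: "x \<in> far_set l"
  shows "oprod Ts x \<in> zero_set"
proof (rule oprod_into[where P = "far_set l", OF _ _ _ x])
  show "\<forall>T\<in>set Ts. \<forall>x\<in>far_set l. T x \<in> far_set l" using factor_far_set factors by blast
  show "\<forall>T\<in>set Ts. \<forall>x\<in>zero_set. T x \<in> zero_set" using factor_zero_set factors by blast
  show "\<exists>T\<in>set Ts. \<forall>x\<in>far_set l. T x \<in> zero_set" using AB_far_set_zero boolean by blast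
qed

end

locale alternating_factors = free_product +
  fixes m :: nat and k and Ts
  assumes factors: "\<And>i. 1 \<le> i \<Longrightarrow> i \<le> m \<Longrightarrow> set (Ts i) \<subseteq> AF Xo (k i) \<union> AB Xo (k i)"
    and alternating: "\<And>i. 1 \<le> i \<Longrightarrow> i < m \<Longrightarrow> k i \<noteq> k (Suc i)"
begin

lemma oprod_factors_preserve:
  assumes "\<And>l T x. T \<in> AF Xo l \<union> AB Xo l \<Longrightarrow> x \<in> P \<Longrightarrow> T x \<in> P"
    and "1 \<le> a" "b \<le> m + 1" "x \<in> P"
  shows "oprod (concat (map Ts [a..<b])) x \<in> P"
proof (rule oprod_preserves[OF ballI[OF ballI] \<open>x \<in> P\<close>])
  fix T y assume T: "T \<in> set (concat (map Ts [a..<b]))" and y: "y \<in> P"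
  from T obtain i where "i \<in> set [a..<b]" "T \<in> set (Ts i)" by auto
  moreover from this(1) have "1 \<le> i" "i \<le> m" using assms(2,3) by auto
  ultimately show "T y \<in> P" using factors assms(1) y by blast
qed

lemma oprod_centered_chain:
  assumes "1 \<le> a" "a \<le> b" "b \<le> m"
    and free: "\<forall>i\<in>{a..b}. set (Ts i) \<subseteq> AF Xo (k i)"
    and centered: "\<forall>i\<in>{a..b}. Exp Xo (oprod (Ts i)) = 0"
    and f: "away_from (k b) f"
  shows "\<exists>g. oprod (concat (map Ts [a..<Suc b])) (\<beta>, cls Xo f) = (0, cls Xo g) \<and> g \<in> ZW Xo
    \<and> (\<forall>w. g w \<noteq> 0 \<longrightarrow> fst (hd w) = k a \<and> (a < b \<longrightarrow> 2 \<le> length w))"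
  using \<open>a \<le> b\<close>
proof (induction a rule: inc_induct)
  case base
  have "\<forall>T\<in>set (Ts b). T \<in> AF Xo (k b)" "Exp Xo (oprod (Ts b)) = 0"
    using free centered \<open>a \<le> b\<close> by auto
  then obtain g where "oprod (Ts b) (\<beta>, cls Xo f) = (0, cls Xo g)" "g \<in> ZW Xo"
      "\<forall>w. g w \<noteq> 0 \<longrightarrow> fst (hd w) = k b"
    using oprod_AF_centered[OF _ _ f, where \<beta> = \<beta>] by blast
  then show ?case by auto
next
  case (step i)
  obtain g where g: "oprod (concat (map Ts [Suc i..<Suc b])) (\<beta>, cls Xo f) = (0, cls Xo g)"
      "g \<in> ZW Xo" "\<forall>w. g w \<noteq> 0 \<longrightarrow> fst (hd w) = k (Suc i)"
    using step.IH by blast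
  have "k i \<noteq> k (Suc i)" using alternating step.hyps assms(1,3) by simp
  then have "away_from (k i) g" using g(2,3) unfolding away_from_def by auto
  then obtain g' where "oprod (Ts i) (0, cls Xo g) = (0, cls Xo g')" "g' \<in> ZW Xo"
      "\<forall>w. g' w \<noteq> 0 \<longrightarrow> fst (hd w) = k i \<and> 2 \<le> length w"
    using oprod_AF_centered[of "Ts i" "k i" g 0] free centered step.hyps by fastforce
  moreover have "[i..<Suc b] = i # [Suc i..<Suc b]" using step.hyps by (simp add: upt_conv_Cons)
  ultimately show ?case using g(1) by (auto simp: oprod_append)
qed

lemma oprod_tail_away_from:
  assumes "1 \<le> b" "b \<le> m"
    and boolean: "b = m \<or> (\<exists>T\<in>set (Ts (Suc b)). T \<in> AB Xo (k (Suc b)))"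
  shows "\<exists>\<beta> f. oprod (concat (map Ts [Suc b..<Suc m])) (1, cls Xo (\<lambda>_. 0)) = (\<beta>, cls Xo f)
    \<and> away_from (k b) f"
proof (cases "b = m")
  case True
  then show ?thesis using ZW_zero by (auto simp: oprod_Nil away_from_def)
next
  case False
  let ?l = "k (Suc b)"
  have "(1, cls Xo (\<lambda>_. 0)) \<in> FPcar Xo" using ZW_zero FPcar_iff by blast
  then have "oprod (concat (map Ts [Suc (Suc b)..<Suc m])) (1, cls Xo (\<lambda>_. 0)) \<in> FPcar Xo"
    by (rule oprod_factors_preserve[rotated 3]) (use factor_FPcar in auto)
  then have "oprod (Ts (Suc b) @ concat (map Ts [Suc (Suc b)..<Suc m])) (1, cls Xo (\<lambda>_. 0))
      \<in> summand_set ?l"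
    using oprod_boolean_into_summand_set[of "Ts (Suc b)" ?l] factors boolean False \<open>b \<le> m\<close>
    by (simp add: oprod_append)
  moreover have "[Suc b..<Suc m] = Suc b # [Suc (Suc b)..<Suc m]"
    using False \<open>b \<le> m\<close> by (simp add: upt_conv_Cons)
  ultimately obtain \<beta> g where "oprod (concat (map Ts [Suc b..<Suc m])) (1, cls Xo (\<lambda>_. 0)) = (\<beta>, cls Xo g)"
      "g \<in> ZW Xo" "\<forall>w. g w \<noteq> 0 \<longrightarrow> (\<exists>\<xi>. w = [(?l, \<xi>)])"
    unfolding summand_set_def by auto
  moreover have "k b \<noteq> ?l" using alternating False assms(1,2) by simp
  ultimately show ?thesis unfolding away_from_def by fastforce
qed

lemma oprod_head_annihilates:
  assumes "1 \<le> a" "a \<le> m"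
    and boolean: "a = 1 \<or> (\<exists>T\<in>set (Ts (a - 1)). T \<in> AB Xo (k (a - 1)))"
    and g: "g \<in> ZW Xo" "\<forall>w. g w \<noteq> 0 \<longrightarrow> fst (hd w) = k a \<and> 2 \<le> length w"
  shows "fst (oprod (concat (map Ts [1..<a])) (0, cls Xo g)) = 0"
proof (cases "a = 1")
  case True
  then show ?thesis by (simp add: oprod_Nil)
next
  case False
  let ?l = "k (a - 1)"
  have a1: "1 \<le> a - 1" "a - 1 < m" "Suc (a - 1) = a" using False assms(1,2) by auto
  then have "\<forall>w. g w \<noteq> 0 \<longrightarrow> 2 \<le> length w \<and> (fst (hd w) = ?l \<longrightarrow> 3 \<le> length w)"
    using g(2) alternating[of "a - 1"] by auto
  then have "(0, cls Xo g) \<in> far_set ?l" unfolding far_set_def using g(1) by blast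
  then have "oprod (Ts (a - 1)) (0, cls Xo g) \<in> zero_set"
    using oprod_boolean_far_set_zero factors[of "a - 1"] boolean False a1 by simp
  then have "oprod (concat (map Ts [1..<a - 1]) @ Ts (a - 1)) (0, cls Xo g) \<in> zero_set"
    unfolding oprod_append comp_def
    by (rule oprod_factors_preserve[rotated 3]) (use factor_zero_set a1 in auto)
  moreover have "[1..<a] = [1..<a - 1] @ [a - 1]"
    using upt_Suc_append[of 1 "a - 1"] a1 by simp
  ultimately show ?thesis unfolding zero_set_def by simp
qed

end

theorem proposition6p8:
  fixes e :: "complex \<Rightarrow> 'b::ring_1"
    and Xo :: "'i \<Rightarrow> ('b, 'x) bimod"
    and S :: "'i \<Rightarrow> ('b, 'i, 'x) fpop set"
    and m l1 l2 :: nat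
    and k :: "nat \<Rightarrow> 'i"
    and Ts :: "nat \<Rightarrow> ('b, 'i, 'x) fpop list"
    and A :: "nat \<Rightarrow> ('b, 'i, 'x) fpop"
  assumes B_alg: "cplx_alg e"
    and bimods: "\<forall>l. is_bimod e (Xo l)"
    and S_sub: "\<forall>l. S l \<subseteq> AF Xo l \<union> AB Xo l"
    and simple: "\<forall>i\<in>{1..m}. Ts i \<noteq> [] \<and> set (Ts i) \<subseteq> S (k i) \<and> A i = oprod (Ts i)"
    and l_bounds: "1 \<le> l1" "l1 < l2" "l2 \<le> m"
    and not_bool: "\<forall>i\<in>{l1..l2}. \<not> boolean_prod Xo S (k i) (Ts i)"
    and left_end: "l1 = 1 \<or> boolean_prod Xo S (k (l1 - 1)) (Ts (l1 - 1))"
    and right_end: "l2 = m \<or> boolean_prod Xo S (k (l2 + 1)) (Ts (l2 + 1))"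
    and alternating: "\<forall>i. 1 \<le> i \<and> i < m \<longrightarrow> k i \<noteq> k (i + 1)"
    and centered: "\<forall>i\<in>{l1..l2}. Exp Xo (A i) = 0"
  shows "Exp Xo (oprod (map A [1..<m + 1])) = 0"
proof -
  interpret alternating_factors e Xo m k Ts
  proof
    show "is_bimod e (Xo l)" for l using bimods by blast
    show "set (Ts i) \<subseteq> AF Xo (k i) \<union> AB Xo (k i)" if "1 \<le> i" "i \<le> m" for i
      using simple S_sub that by fastforce
    show "k i \<noteq> k (Suc i)" if "1 \<le> i" "i < m" for i using alternating that by simp
  qed
  have free: "\<forall>i\<in>{l1..l2}. set (Ts i) \<subseteq> AF Xo (k i)"
  proof (intro ballI subsetI)
    fix i T assume i: "i \<in> {l1..l2}" and T: "T \<in> set (Ts i)"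
    then have "T \<in> S (k i)" using simple l_bounds by auto
    then show "T \<in> AF Xo (k i)" using S_sub not_bool i T unfolding boolean_prod_def by blast
  qed
  obtain \<beta> f where tail: "oprod (concat (map Ts [Suc l2..<Suc m])) (1, cls Xo (\<lambda>_. 0)) = (\<beta>, cls Xo f)"
      and f: "away_from (k l2) f"
    using oprod_tail_away_from[of l2] right_end l_bounds unfolding boolean_prod_def by auto
  obtain g where stretch: "oprod (concat (map Ts [l1..<Suc l2])) (\<beta>, cls Xo f) = (0, cls Xo g)"
      and g: "g \<in> ZW Xo" "\<forall>w. g w \<noteq> 0 \<longrightarrow> fst (hd w) = k l1 \<and> 2 \<le> length w"
    using oprod_centered_chain[OF _ _ _ free _ f, of \<beta>] centered simple l_bounds by force
  have "fst (oprod (concat (map Ts [1..<l1])) (0, cls Xo g)) = 0"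
    using oprod_head_annihilates[OF _ _ _ g] left_end l_bounds unfolding boolean_prod_def by auto
  then show ?thesis
    using oprod_map_split[of m A Ts l1 l2] simple l_bounds tail stretch unfolding Exp_def by simp
qed

end
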